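(* Let $\mathfrak{A}$ be a unital $\mathrm{C}^*$-algebra, let $\mathfrak{S}\subset\mathfrak{A}$ be an operator system and let $\psi$ be a state on $\mathfrak{A}$. The following are equivalent: (i) $\psi$ is $\mathfrak{S}$-peaking; (ii) $\psi$ has the unique extension property with respect to $\mathfrak{S}$, and the restriction $\psi|_{\mathfrak{S}}$ is a weak-$*$ exposed point of the set $Q$ of self-adjoint linear functionals on $\mathfrak{S}$ of norm at most $1$.
   Context: An operator system $\mathfrak{S}\subset\mathfrak{A}$ is a unital self-adjoint subspace. A state $\psi$ on $\mathfrak{A}$ is $\mathfrak{S}$-peaking if there is a self-adjoint $s\in\mathfrak{S}$ with $\|s\|=1$ such that $\psi(s)=1>|\phi(s)|$ for every state $\phi$ on $\mathfrak{A}$ with $\phi\neq\psi$. A state $\psi$ on $\mathfrak{A}$ has the unique extension property with respect to $\mathfrak{S}$ if it is the unique unital completely positive map on $\mathfrak{A}$ extending $\psi|_{\mathfrak{S}}$. For a normed space $X$ and a weak-$*$ closed convex set $Q$ in the closed unit ball of $X^*$ containing $0$, a nonzero $\Lambda_0\in Q$ is a weak-$*$ exposed point of $Q$ if there is $x_0\in X$ with $\operatorname{Re}\Lambda_0(x_0)=1>\operatorname{Re}\Lambda(x_0)$ for all $\Lambda\in Q$ with $\Lambda\neq\Lambda_0$. A functional $\Lambda$ on $\mathfrak{S}$ is self-adjoint if $\Lambda(s^* )=\overline{\Lambda(s)}$ for all $s\in\mathfrak{S}$. *)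

theory Defs
  imports "HOL-Analysis.Analysis"
begin

text \<open>A unital C*-algebra: a unital real Banach algebra (type class) equipped with a
complex scalar multiplication compatible with the real one, and an involution satisfying
the C*-identity.\<close>

locale unital_cstar_algebra =
  fixes scal :: "complex \<Rightarrow> 'a::{real_normed_algebra_1, banach} \<Rightarrow> 'a"
    and star :: "'a \<Rightarrow> 'a"
  assumes scal_of_real: "\<And>r x. scal (complex_of_real r) x = scaleR r x"
    and scal_add_left: "\<And>a b x. scal (a + b) x = scal a x + scal b x"
    and scal_add_right: "\<And>a x y. scal a (x + y) = scal a x + scal a y"
    and scal_scal: "\<And>a b x. scal a (scal b x) = scal (a * b) x"
    and norm_scal: "\<And>a x. norm (scal a x) = cmod a * norm x"
    and scal_mult_left: "\<And>a x y. scal a (x * y) = scal a x * y"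
    and scal_mult_right: "\<And>a x y. scal a (x * y) = x * scal a y"
    and star_add: "\<And>x y. star (x + y) = star x + star y"
    and star_scal: "\<And>a x. star (scal a x) = scal (cnj a) (star x)"
    and star_star: "\<And>x. star (star x) = x"
    and star_mult: "\<And>x y. star (x * y) = star y * star x"
    and cstar_identity: "\<And>x. norm (star x * x) = (norm x)\<^sup>2"

definition operator_system ::
  "(complex \<Rightarrow> 'a::{real_normed_algebra_1} \<Rightarrow> 'a) \<Rightarrow> ('a \<Rightarrow> 'a) \<Rightarrow> 'a set \<Rightarrow> bool" where
  "operator_system scal star S \<longleftrightarrow>
     0 \<in> S \<and> 1 \<in> S \<and>
     (\<forall>x\<in>S. \<forall>y\<in>S. x + y \<in> S) \<and>
     (\<forall>c. \<forall>x\<in>S. scal c x \<in> S) \<and>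
     (\<forall>x\<in>S. star x \<in> S)"

definition clinear_functional ::
  "(complex \<Rightarrow> 'a::{real_normed_algebra_1} \<Rightarrow> 'a) \<Rightarrow> ('a \<Rightarrow> complex) \<Rightarrow> bool" where
  "clinear_functional scal \<phi> \<longleftrightarrow>
     (\<forall>x y. \<phi> (x + y) = \<phi> x + \<phi> y) \<and> (\<forall>c x. \<phi> (scal c x) = c * \<phi> x)"

definition is_state ::
  "(complex \<Rightarrow> 'a::{real_normed_algebra_1} \<Rightarrow> 'a) \<Rightarrow> ('a \<Rightarrow> 'a) \<Rightarrow> ('a \<Rightarrow> complex) \<Rightarrow> bool" where
  "is_state scal star \<phi> \<longleftrightarrow>
     clinear_functional scal \<phi> \<and> \<phi> 1 = 1 \<and>
     (\<forall>x. Im (\<phi> (star x * x)) = 0 \<and> Re (\<phi> (star x * x)) \<ge> 0)"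

definition pos_matrix_alg ::
  "('a::{real_normed_algebra_1} \<Rightarrow> 'a) \<Rightarrow> nat \<Rightarrow> (nat \<Rightarrow> nat \<Rightarrow> 'a) \<Rightarrow> bool" where
  "pos_matrix_alg star n a \<longleftrightarrow>
     (\<exists>b :: nat \<Rightarrow> nat \<Rightarrow> 'a. \<forall>i<n. \<forall>j<n. a i j = (\<Sum>k<n. star (b k i) * b k j))"

definition psd_complex_matrix :: "nat \<Rightarrow> (nat \<Rightarrow> nat \<Rightarrow> complex) \<Rightarrow> bool" where
  "psd_complex_matrix n m \<longleftrightarrow>
     (\<forall>v :: nat \<Rightarrow> complex.
        let q = (\<Sum>i<n. \<Sum>j<n. cnj (v i) * m i j * v j) in Im q = 0 \<and> Re q \<ge> 0)"

definition ucp_functional ::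
  "(complex \<Rightarrow> 'a::{real_normed_algebra_1} \<Rightarrow> 'a) \<Rightarrow> ('a \<Rightarrow> 'a) \<Rightarrow> ('a \<Rightarrow> complex) \<Rightarrow> bool" where
  "ucp_functional scal star \<phi> \<longleftrightarrow>
     clinear_functional scal \<phi> \<and> \<phi> 1 = 1 \<and>
     (\<forall>n a. pos_matrix_alg star n a \<longrightarrow> psd_complex_matrix n (\<lambda>i j. \<phi> (a i j)))"

definition S_peaking ::
  "(complex \<Rightarrow> 'a::{real_normed_algebra_1} \<Rightarrow> 'a) \<Rightarrow> ('a \<Rightarrow> 'a) \<Rightarrow> 'a set \<Rightarrow> ('a \<Rightarrow> complex) \<Rightarrow> bool" where
  "S_peaking scal star S \<psi> \<longleftrightarrow>
     (\<exists>s\<in>S. star s = s \<and> norm s = 1 \<and> \<psi> s = 1 \<and>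
        (\<forall>\<phi>. is_state scal star \<phi> \<and> \<phi> \<noteq> \<psi> \<longrightarrow> cmod (\<phi> s) < 1))"

definition unique_extension_property ::
  "(complex \<Rightarrow> 'a::{real_normed_algebra_1} \<Rightarrow> 'a) \<Rightarrow> ('a \<Rightarrow> 'a) \<Rightarrow> 'a set \<Rightarrow> ('a \<Rightarrow> complex) \<Rightarrow> bool" where
  "unique_extension_property scal star S \<psi> \<longleftrightarrow>
     (\<forall>\<phi>. ucp_functional scal star \<phi> \<and> (\<forall>s\<in>S. \<phi> s = \<psi> s) \<longrightarrow> \<phi> = \<psi>)"

text \<open>Functionals on S are represented as functions on the whole type that vanish off S
(so equality of such functions is equality on S). The restriction of psi to S: \<close>
definition restrict_fun :: "'a set \<Rightarrow> ('a \<Rightarrow> complex) \<Rightarrow> 'a \<Rightarrow> complex" where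
  "restrict_fun S \<psi> = (\<lambda>x. if x \<in> S then \<psi> x else 0)"

definition sa_unit_ball_dual ::
  "(complex \<Rightarrow> 'a::{real_normed_algebra_1} \<Rightarrow> 'a) \<Rightarrow> ('a \<Rightarrow> 'a) \<Rightarrow> 'a set \<Rightarrow> ('a \<Rightarrow> complex) set" where
  "sa_unit_ball_dual scal star S =
     {\<Lambda>. (\<forall>x. x \<notin> S \<longrightarrow> \<Lambda> x = 0) \<and>
          (\<forall>x\<in>S. \<forall>y\<in>S. \<Lambda> (x + y) = \<Lambda> x + \<Lambda> y) \<and>
          (\<forall>c. \<forall>x\<in>S. \<Lambda> (scal c x) = c * \<Lambda> x) \<and>
          (\<forall>x\<in>S. \<Lambda> (star x) = cnj (\<Lambda> x)) \<and>
          (\<forall>x\<in>S. cmod (\<Lambda> x) \<le> norm x)}"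

definition weak_star_exposed ::
  "'a set \<Rightarrow> ('a \<Rightarrow> complex) set \<Rightarrow> ('a \<Rightarrow> complex) \<Rightarrow> bool" where
  "weak_star_exposed S Q \<Lambda>0 \<longleftrightarrow>
     \<Lambda>0 \<in> Q \<and> \<Lambda>0 \<noteq> (\<lambda>_. 0) \<and>
     (\<exists>x0\<in>S. Re (\<Lambda>0 x0) = 1 \<and> (\<forall>\<Lambda>\<in>Q. \<Lambda> \<noteq> \<Lambda>0 \<longrightarrow> Re (\<Lambda> x0) < 1))"

end

theory Submission
  imports Defs "HOL-Complex_Analysis.Complex_Analysis" "HOL-Computational_Algebra.Fundamental_Theorem_Algebra"
begin

text \<open>If \<open>s \<in> S\<close> peaks at \<open>\<psi>\<close>, any ucp extension of \<open>\<psi>|\<^sub>S\<close> is a state with value \<open>1\<close> at \<open>s\<close>,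
  hence equals \<open>\<psi>\<close>.  For exposedness, a \<open>\<Lambda> \<in> Q\<close> with \<open>Re \<Lambda>(s) \<ge> 1\<close> has \<open>\<Lambda>(s) = 1\<close> and extends by
  Hahn--Banach to a contraction \<open>F\<close> on the algebra.  Since \<open>-1\<close> is not a spectral value of \<open>s\<close>
  (a state would otherwise take the value \<open>-1\<close> at \<open>s\<close>), \<open>\<parallel>s - \<delta>\<parallel> \<le> 1 - \<delta>\<close> for some \<open>\<delta> > 0\<close>,
  which forces \<open>F(1) = 1\<close>; so \<open>F\<close> is a state and \<open>F = \<psi>\<close>.

  Conversely, if \<open>x\<^sub>0\<close> exposes \<open>\<psi>|\<^sub>S\<close>, its real part \<open>s\<close> is a peak element: for a state
  \<open>\<phi> \<noteq> \<psi>\<close> both \<open>\<phi>|\<^sub>S\<close> and \<open>-\<phi>|\<^sub>S\<close> are points of \<open>Q\<close> other than \<open>\<psi>|\<^sub>S\<close>, so \<open>|\<phi>(s)| < 1\<close>, and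
  \<open>\<parallel>s\<parallel> = 1\<close> because the norm of a self-adjoint element is the modulus of a spectral value, and
  spectral values are attained by states.\<close>

context unital_cstar_algebra
begin

lemma scal_zero_left[simp]: "scal 0 x = 0"
  using scal_of_real[of 0 x] by simp

lemma scal_one[simp]: "scal 1 x = x"
  using scal_of_real[of 1 x] by simp

lemma scal_zero_right[simp]: "scal c 0 = 0"
  using scal_add_right[of c 0 0] by simp

lemma scal_minus_right: "scal c (- x) = - scal c x"
  using scal_add_right[of c x "-x"] by (simp add: minus_unique)

lemma scal_minus_left: "scal (- c) x = - scal c x"
  using scal_add_left[of c "-c" x] by (simp add: minus_unique)

lemma scal_diff_right: "scal c (x - y) = scal c x - scal c y"
  using scal_add_right[of c x "-y"] by (simp add: scal_minus_right)

lemma scal_diff_left: "scal (a - b) x = scal a x - scal b x"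
  using scal_add_left[of a "-b" x] by (simp add: scal_minus_left)

lemma scal_one_mult: "scal c 1 * x = scal c x"
  using scal_mult_left[of c 1 x] by simp

lemma mult_scal_one: "x * scal c 1 = scal c x"
  using scal_mult_right[of c x 1] by simp

lemma scal_mult_both: "scal c x * scal d y = scal (c * d) (x * y)"
  by (metis scal_mult_left scal_mult_right scal_scal)

lemma norm_scal_one[simp]: "norm (scal c 1) = cmod c"
  by (simp add: norm_scal)

lemma star_zero[simp]: "star 0 = 0"
  using star_add[of 0 0] by simp

lemma star_minus: "star (- x) = - star x"
  using star_add[of x "-x"] by (simp add: minus_unique)

lemma star_diff: "star (x - y) = star x - star y"
  using star_add[of x "-y"] by (simp add: star_minus)

lemma star_one[simp]: "star 1 = 1"
proof -
  have "star 1 = star 1 * star (star 1)" by (metis star_star mult_1_right)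
  also have "\<dots> = star (star 1 * 1)" by (rule star_mult[symmetric])
  also have "\<dots> = 1" by (simp add: star_star)
  finally show ?thesis .
qed

lemma star_scaleR: "star (r *\<^sub>R x) = r *\<^sub>R star x"
  using star_scal[of "complex_of_real r" x] by (simp add: scal_of_real)

lemma star_sum: "star (sum f A) = (\<Sum>i\<in>A. star (f i))"
  by (induction A rule: infinite_finite_induct) (auto simp: star_add)

lemma star_power: "star (x ^ n) = star x ^ n"
proof (induction n)
  case (Suc n)
  have "star (x ^ Suc n) = star (x * x ^ n)" by simp
  also have "\<dots> = star (x^n) * star x" by (simp add: star_mult)
  also have "\<dots> = star x ^ n * star x" using Suc by simp
  also have "\<dots> = star x ^ Suc n" by (simp add: power_commutes)
  finally show ?case .
qed simp

lemma scal_power: "(scal z k) ^ n = scal (z ^ n) (k ^ n)"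
proof (induction n)
  case (Suc n) thus ?case by (simp add: scal_mult_both)
qed simp

lemma norm_star_le: "norm x \<le> norm (star x)"
proof (cases "x = 0")
  case False
  have "(norm x)^2 = norm (star x * x)" by (simp add: cstar_identity)
  also have "\<dots> \<le> norm (star x) * norm x" by (rule norm_mult_ineq)
  finally have "norm x * norm x \<le> norm (star x) * norm x" by (simp add: power2_eq_square)
  with False show ?thesis by simp
qed simp

lemma norm_star[simp]: "norm (star x) = norm x"
  using norm_star_le[of x] norm_star_le[of "star x"] by (simp add: star_star)

lemma bounded_linear_star: "bounded_linear star"
  by (rule bounded_linear_intro[where K=1]) (auto simp: star_add star_scaleR)

lemma norm_sa_square: "star h = h \<Longrightarrow> norm (h * h) = (norm h)^2"
  using cstar_identity[of h] by simp

lemma norm_sa_pow2: "star h = h \<Longrightarrow> norm (h ^ (2^m)) = (norm h) ^ (2^m)"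
proof (induction m)
  case (Suc m)
  have sa: "star (h^(2^m)) = h^(2^m)" using Suc.prems by (simp add: star_power)
  have "h ^ (2 ^ Suc m) = h^(2^m) * h^(2^m)" by (simp add: power_add[symmetric] mult_2)
  hence "norm (h ^ (2 ^ Suc m)) = (norm (h^(2^m)))^2" using norm_sa_square[OF sa] by simp
  also have "\<dots> = (norm h)^(2^Suc m)" using Suc by (simp add: power_mult[symmetric] mult.commute)
  finally show ?case .
qed simp

lemma sa_decomposition:
  obtains a b where "star a = a" "star b = b" "x = a + scal \<i> b" "star x = a - scal \<i> b"
proof -
  define a where "a = scal (1/2) (x + star x)"
  define b where "b = scal (- \<i> / 2) (x - star x)"
  have sa: "star a = a" unfolding a_def by (simp add: star_scal star_add star_star add.commute)
  have sb: "star b = b" unfolding b_def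
    by (simp add: star_scal star_diff star_star scal_diff_right scal_minus_left)
  have ib: "scal \<i> b = scal (1/2) (x - star x)" unfolding b_def by (simp add: scal_scal)
  have two: "x + x = scal 2 x" using scal_add_left[of 1 1 x] by simp
  have ex: "x = a + scal \<i> b"
  proof -
    have "a + scal \<i> b = scal (1/2) ((x + star x) + (x - star x))"
      unfolding ib a_def by (simp only: scal_add_right)
    also have "(x + star x) + (x - star x) = scal 2 x" using two by (simp add: algebra_simps)
    finally show ?thesis by (simp add: scal_scal)
  qed
  have esx: "star x = a - scal \<i> b"
  proof -
    have "a - scal \<i> b = scal (1/2) ((x + star x) - (x - star x))"
      unfolding ib a_def by (simp only: scal_diff_right)
    also have "(x + star x) - (x - star x) = scal 2 (star x)" using scal_add_left[of 1 1 "star x"] by (simp add: algebra_simps)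
    finally show ?thesis by (simp add: scal_scal)
  qed
  show ?thesis using that sa sb ex esx by blast
qed

lemma clinear_add: "clinear_functional scal F \<Longrightarrow> F (x + y) = F x + F y"
  unfolding clinear_functional_def by blast

lemma clinear_scal: "clinear_functional scal F \<Longrightarrow> F (scal c x) = c * F x"
  unfolding clinear_functional_def by blast

lemma clinear_zero: "clinear_functional scal F \<Longrightarrow> F 0 = 0"
  using clinear_scal[of F 0 0] by simp

lemma clinear_minus: "clinear_functional scal F \<Longrightarrow> F (- x) = - F x"
  using clinear_scal[of F "-1" x] by (simp add: scal_minus_left)

lemma clinear_diff: "clinear_functional scal F \<Longrightarrow> F (x - y) = F x - F y"
  using clinear_add[of F x "-y"] clinear_minus[of F y] by simp

lemma clinear_scaleR: "clinear_functional scal F \<Longrightarrow> F (r *\<^sub>R x) = complex_of_real r * F x"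
  using clinear_scal[of F "complex_of_real r" x] by (simp add: scal_of_real)

lemma clinear_sum: "clinear_functional scal F \<Longrightarrow> F (sum g A) = (\<Sum>i\<in>A. F (g i))"
  by (induction A rule: infinite_finite_induct) (auto simp: clinear_zero clinear_add)

end

section \<open>Invertible elements of a Banach algebra\<close>

definition invertible_elem :: "'a::real_normed_algebra_1 \<Rightarrow> bool" where
  "invertible_elem x \<longleftrightarrow> (\<exists>y. x * y = 1 \<and> y * x = 1)"

definition inverse_elem :: "'a::real_normed_algebra_1 \<Rightarrow> 'a" where
  "inverse_elem x = (THE y. x * y = 1 \<and> y * x = 1)"

lemma left_inverse_eq_right_inverse:
  fixes x :: "'a::real_normed_algebra_1"
  assumes "x * y = 1" "y' * x = 1" shows "y' = y"
proof -
  have "y' = y' * (x * y)" using assms by simp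
  also have "\<dots> = (y' * x) * y" by (simp add: mult.assoc)
  finally show ?thesis using assms by simp
qed

lemma inverse_elem_eq:
  fixes x :: "'a::real_normed_algebra_1"
  assumes "x * y = 1" "y * x = 1" shows "inverse_elem x = y"
  unfolding inverse_elem_def
  by (rule the_equality) (use assms left_inverse_eq_right_inverse in auto)

lemma invertible_elemI: "x * y = 1 \<Longrightarrow> y * x = 1 \<Longrightarrow> invertible_elem x"
  unfolding invertible_elem_def by blast

lemma inverse_elem_right: "invertible_elem x \<Longrightarrow> x * inverse_elem x = 1"
  unfolding invertible_elem_def using inverse_elem_eq by metis

lemma inverse_elem_left: "invertible_elem x \<Longrightarrow> inverse_elem x * x = 1"
  unfolding invertible_elem_def using inverse_elem_eq by metis

lemma invertible_elem_one[simp]: "invertible_elem (1::'a::real_normed_algebra_1)"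
  by (rule invertible_elemI[of _ 1]) simp_all

lemma invertible_elem_mult:
  fixes a b :: "'a::real_normed_algebra_1"
  assumes a: "invertible_elem a" and b: "invertible_elem b"
  shows "invertible_elem (a * b)"
proof (rule invertible_elemI)
  have "(a * b) * (inverse_elem b * inverse_elem a) = a * (b * inverse_elem b) * inverse_elem a"
    by (simp add: mult.assoc)
  thus "(a * b) * (inverse_elem b * inverse_elem a) = 1" using a b by (simp add: inverse_elem_right)
  have "(inverse_elem b * inverse_elem a) * (a * b) = inverse_elem b * (inverse_elem a * a) * b"
    by (simp add: mult.assoc)
  thus "(inverse_elem b * inverse_elem a) * (a * b) = 1" using a b by (simp add: inverse_elem_left)
qed

lemma invertible_elem_commute_factor:
  fixes a b :: "'a::real_normed_algebra_1"
  assumes "a * b = b * a" "invertible_elem (a * b)" shows "invertible_elem a"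
proof -
  define m where "m = inverse_elem (a * b)"
  have r: "a * (b * m) = 1" using assms(2) inverse_elem_right unfolding m_def by (metis mult.assoc)
  have l: "(m * b) * a = 1" using assms inverse_elem_left unfolding m_def by (metis mult.assoc)
  have "m * b = b * m" using left_inverse_eq_right_inverse[OF r l] .
  thus ?thesis using r l invertible_elemI by metis
qed

lemma invertible_elem_minus_iff: "invertible_elem (- x) \<longleftrightarrow> invertible_elem x"
  unfolding invertible_elem_def by (metis minus_mult_minus minus_minus)

lemma invertible_one_minus_commute:
  fixes a b :: "'a::real_normed_algebra_1"
  assumes "invertible_elem (1 - a * b)"
  shows "invertible_elem (1 - b * a)"
proof (rule invertible_elemI)
  define u where "u = inverse_elem (1 - a * b)"
  have r: "(1 - a * b) * u = 1" and l: "u * (1 - a * b) = 1"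
    using assms inverse_elem_right inverse_elem_left unfolding u_def by auto
  have "(1 - b * a) * (1 + b * u * a) = 1 + b * ((1 - a * b) * u - 1) * a"
    by (simp add: algebra_simps mult.assoc)
  thus "(1 - b * a) * (1 + b * u * a) = 1" using r by simp
  have "(1 + b * u * a) * (1 - b * a) = 1 + b * (u * (1 - a * b) - 1) * a"
    by (simp add: algebra_simps mult.assoc)
  thus "(1 + b * u * a) * (1 - b * a) = 1" using l by simp
qed

lemma neumann_series:
  fixes x :: "'a::{real_normed_algebra_1,banach}"
  assumes "norm x < 1"
  shows "summable (\<lambda>n. x ^ n)" and "(1 - x) * (\<Sum>n. x ^ n) = 1" and "(\<Sum>n. x ^ n) * (1 - x) = 1"
proof -
  show s: "summable (\<lambda>n. x ^ n)"
    by (rule summable_comparison_test[OF _ summable_geometric[of "norm x"]])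
       (use assms in \<open>auto intro!: exI[of _ 0] norm_power_ineq\<close>)
  have partial: "(\<lambda>N. \<Sum>n<N. x ^ n) \<longlonglongrightarrow> (\<Sum>n. x ^ n)"
    using s by (simp add: summable_LIMSEQ)
  have tail: "(\<lambda>N. 1 - x ^ N) \<longlonglongrightarrow> 1"
    using tendsto_diff[OF tendsto_const[of 1] summable_LIMSEQ_zero[OF s]] by simp
  have telescope: "(1 - x) * (\<Sum>n<N. x ^ n) = 1 - x ^ N" for N
    by (induction N) (simp_all add: distrib_left left_diff_distrib)
  have commute: "(\<Sum>n<N. x ^ n) * (1 - x) = (1 - x) * (\<Sum>n<N. x ^ n)" for N
  proof -
    have "(\<Sum>n<N. x ^ n) * x = x * (\<Sum>n<N. x ^ n)"
      by (simp add: sum_distrib_left sum_distrib_right power_commutes)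
    thus ?thesis by (simp add: right_diff_distrib left_diff_distrib)
  qed
  have "(\<lambda>N. (1 - x) * (\<Sum>n<N. x ^ n)) \<longlonglongrightarrow> (1 - x) * (\<Sum>n. x ^ n)"
    by (intro tendsto_mult tendsto_const partial)
  thus "(1 - x) * (\<Sum>n. x ^ n) = 1"
    unfolding telescope using tail by (rule LIMSEQ_unique)
  have "(\<lambda>N. (\<Sum>n<N. x ^ n) * (1 - x)) \<longlonglongrightarrow> (\<Sum>n. x ^ n) * (1 - x)"
    by (intro tendsto_mult tendsto_const partial)
  thus "(\<Sum>n. x ^ n) * (1 - x) = 1"
    unfolding commute telescope using tail by (rule LIMSEQ_unique)
qed

lemma invertible_one_minus:
  fixes x :: "'a::{real_normed_algebra_1,banach}"
  assumes "norm x < 1"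
  shows "invertible_elem (1 - x)"
  using neumann_series[OF assms] invertible_elemI by metis

lemma neumann_series_sums:
  fixes x :: "'a::{real_normed_algebra_1,banach}"
  assumes "norm x < 1"
  shows "(\<lambda>n. x ^ n) sums inverse_elem (1 - x)"
  using neumann_series[OF assms] inverse_elem_eq by (metis summable_sums)

lemma norm_inverse_one_minus_diff_le:
  fixes x :: "'a::{real_normed_algebra_1,banach}"
  assumes "norm x < 1"
  shows "norm (inverse_elem (1 - x) - 1) \<le> norm x / (1 - norm x)"
proof -
  define s where "s = inverse_elem (1 - x)"
  have "(1 - x) * s = 1" using inverse_elem_right[OF invertible_one_minus[OF assms]] unfolding s_def .
  hence eq: "s - 1 = x * s" by (simp add: algebra_simps)
  have "norm s \<le> 1 + norm x * norm s"
    using norm_triangle_ineq[of 1 "x * s"] norm_mult_ineq[of x s] eq by (simp add: algebra_simps)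
  hence ns: "norm s \<le> 1 / (1 - norm x)" using assms by (simp add: field_simps)
  have "norm (s - 1) \<le> norm x * norm s" unfolding eq by (rule norm_mult_ineq)
  also have "\<dots> \<le> norm x * (1 / (1 - norm x))" by (intro mult_left_mono ns) simp
  finally show ?thesis unfolding s_def by simp
qed

lemma invertible_perturb:
  fixes a d :: "'a::{real_normed_algebra_1,banach}"
  assumes a: "invertible_elem a" and small: "norm (inverse_elem a) * norm d < 1"
  shows "invertible_elem (a - d)"
    and "norm (inverse_elem (a - d) - inverse_elem a)
           \<le> norm (inverse_elem a) * (norm (inverse_elem a) * norm d) / (1 - norm (inverse_elem a) * norm d)"
proof -
  define b where "b = inverse_elem a"
  have ab: "a * b = 1" "b * a = 1" using a by (simp_all add: b_def inverse_elem_right inverse_elem_left)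
  have nbd: "norm (b * d) \<le> norm b * norm d" by (rule norm_mult_ineq)
  hence sm: "norm (b * d) < 1" using small b_def by simp
  have inv1: "invertible_elem (1 - b * d)" using invertible_one_minus[OF sm] .
  define u where "u = inverse_elem (1 - b * d)"
  have eqa: "a - d = a * (1 - b * d)" using ab by (simp add: algebra_simps mult.assoc[symmetric])
  have i1: "(a - d) * (u * b) = 1"
  proof -
    have "(a - d) * (u * b) = a * ((1 - b * d) * u) * b" unfolding eqa by (simp add: mult.assoc)
    also have "\<dots> = 1" using inverse_elem_right[OF inv1] ab unfolding u_def by simp
    finally show ?thesis .
  qed
  have i2: "(u * b) * (a - d) = 1"
  proof -
    have "(u * b) * (a - d) = u * (b * a) * (1 - b * d)" unfolding eqa by (simp add: mult.assoc)
    also have "\<dots> = 1" using inverse_elem_left[OF inv1] ab unfolding u_def by simp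
    finally show ?thesis .
  qed
  show "invertible_elem (a - d)" using i1 i2 invertible_elemI by metis
  have "norm (inverse_elem (a - d) - b) = norm ((u - 1) * b)"
    unfolding inverse_elem_eq[OF i1 i2] by (simp add: algebra_simps)
  also have "\<dots> \<le> norm (u - 1) * norm b" by (rule norm_mult_ineq)
  also have "\<dots> \<le> (norm (b * d) / (1 - norm (b * d))) * norm b"
    by (intro mult_right_mono norm_inverse_one_minus_diff_le[OF sm, folded u_def]) simp
  also have "\<dots> \<le> ((norm b * norm d) / (1 - norm b * norm d)) * norm b"
    using nbd sm small b_def by (intro mult_right_mono frac_le) (auto simp: algebra_simps)
  finally show "norm (inverse_elem (a - d) - inverse_elem a)
           \<le> norm (inverse_elem a) * (norm (inverse_elem a) * norm d) / (1 - norm (inverse_elem a) * norm d)"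
    by (simp add: b_def mult.commute)
qed

lemma open_invertible_elem: "open {x :: 'a::{real_normed_algebra_1,banach}. invertible_elem x}"
proof (rule openI)
  fix a :: 'a assume "a \<in> {x. invertible_elem x}"
  hence a: "invertible_elem a" by simp
  define e where "e = 1 / (norm (inverse_elem a) + 1)"
  have e: "e > 0" unfolding e_def by (simp add: add_nonneg_pos)
  have "ball a e \<subseteq> {x. invertible_elem x}"
  proof
    fix x assume "x \<in> ball a e"
    hence "norm (inverse_elem a) * norm (a - x) \<le> norm (inverse_elem a) * e"
      by (intro mult_left_mono) (auto simp: dist_norm)
    also have "\<dots> < 1" unfolding e_def by (simp add: add_nonneg_pos)
    finally have "invertible_elem (a - (a - x))" by (intro invertible_perturb(1)[OF a])
    thus "x \<in> {x. invertible_elem x}" by simp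
  qed
  thus "\<exists>e>0. ball a e \<subseteq> {x. invertible_elem x}" using e by blast
qed

lemma isCont_inverse_elem:
  fixes a :: "'a::{real_normed_algebra_1,banach}"
  assumes a: "invertible_elem a"
  shows "isCont inverse_elem a"
  unfolding isCont_def
proof (rule LIM_I)
  fix r :: real assume r: "r > 0"
  define B where "B = norm (inverse_elem a) + 1"
  have B: "B > 0" "norm (inverse_elem a) \<le> B" unfolding B_def by (simp_all add: add_nonneg_pos)
  define s where "s = min (1 / (2 * B)) (r / (2 * B * B))"
  have s: "s > 0" using r B by (simp add: s_def)
  show "\<exists>s>0. \<forall>x. x \<noteq> a \<and> norm (x - a) < s \<longrightarrow> norm (inverse_elem x - inverse_elem a) < r"
  proof (intro exI[of _ s] conjI allI impI s)
    fix x assume "x \<noteq> a \<and> norm (x - a) < s"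
    hence nd: "norm (a - x) < s" by (simp add: norm_minus_commute)
    define k where "k = norm (inverse_elem a) * norm (a - x)"
    have "k \<le> B * s" unfolding k_def using nd B by (intro mult_mono) auto
    also have "\<dots> \<le> B * (1 / (2 * B))" using B unfolding s_def by (intro mult_left_mono) auto
    also have "\<dots> = 1/2" using B by simp
    finally have k: "k \<le> 1/2" .
    have "norm (inverse_elem a) * norm (a - x) < 1" using k unfolding k_def by simp
    from invertible_perturb(2)[OF a this]
    have "norm (inverse_elem x - inverse_elem a) \<le> norm (inverse_elem a) * k / (1 - k)"
      unfolding k_def by simp
    also have "\<dots> \<le> norm (inverse_elem a) * k / (1/2)"
      using k unfolding k_def by (intro divide_left_mono) auto
    also have "\<dots> = 2 * (norm (inverse_elem a) * k)" by simp
    also have "\<dots> \<le> 2 * B * B * norm (a - x)"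
      unfolding k_def using B by (simp add: mult.assoc mult_mono)
    also have "\<dots> < 2 * B * B * s" using nd B by simp
    also have "\<dots> \<le> 2 * B * B * (r / (2 * B * B))" using B unfolding s_def by (intro mult_left_mono) auto
    also have "\<dots> = r" using B by simp
    finally show "norm (inverse_elem x - inverse_elem a) < r" by simp
  qed
qed

section \<open>The spectrum\<close>

context unital_cstar_algebra
begin

definition spectrum :: "'a \<Rightarrow> complex set" where
  "spectrum x = {\<mu>. \<not> invertible_elem (x - scal \<mu> 1)}"

lemma invertible_elem_scal: "c \<noteq> 0 \<Longrightarrow> invertible_elem y \<Longrightarrow> invertible_elem (scal c y)"
proof -
  assume c: "c \<noteq> 0" and y: "invertible_elem y"
  have "scal c y * scal (1/c) (inverse_elem y) = scal (c * (1/c)) (y * inverse_elem y)"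
    by (rule scal_mult_both)
  also have "\<dots> = 1" using c y by (simp add: inverse_elem_right)
  finally have 1: "scal c y * scal (1/c) (inverse_elem y) = 1" .
  have "scal (1/c) (inverse_elem y) * scal c y = scal ((1/c) * c) (inverse_elem y * y)"
    by (rule scal_mult_both)
  also have "\<dots> = 1" using c y by (simp add: inverse_elem_left)
  finally show ?thesis using 1 invertible_elemI by metis
qed

lemma spectrum_norm_le: "\<mu> \<in> spectrum x \<Longrightarrow> cmod \<mu> \<le> norm x"
proof (rule ccontr)
  assume mu: "\<mu> \<in> spectrum x" and "\<not> cmod \<mu> \<le> norm x"
  hence lt: "norm x < cmod \<mu>" by simp
  hence nz: "\<mu> \<noteq> 0" by auto
  have n: "norm (scal (1/\<mu>) x) < 1" using lt nz by (simp add: norm_scal norm_divide field_simps)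
  have "invertible_elem (scal (- \<mu>) (1 - scal (1/\<mu>) x))"
    using invertible_elem_scal[OF _ invertible_one_minus[OF n], of "-\<mu>"] nz by simp
  moreover have "scal (- \<mu>) (1 - scal (1/\<mu>) x) = x - scal \<mu> 1"
    using nz by (simp add: scal_diff_right scal_scal scal_minus_left)
  ultimately show False using mu unfolding spectrum_def by simp
qed

lemma invertible_elem_scal_iff: "c \<noteq> 0 \<Longrightarrow> invertible_elem (scal c y) \<longleftrightarrow> invertible_elem y"
  using invertible_elem_scal[of c y] invertible_elem_scal[of "1/c" "scal c y"] by (auto simp: scal_scal)

lemma spectrum_scal: "c \<noteq> 0 \<Longrightarrow> c * \<mu> \<in> spectrum (scal c x) \<longleftrightarrow> \<mu> \<in> spectrum x"
proof -
  assume c: "c \<noteq> 0"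
  have "scal c x - scal (c * \<mu>) 1 = scal c (x - scal \<mu> 1)" by (simp add: scal_diff_right scal_scal)
  thus ?thesis unfolding spectrum_def using invertible_elem_scal_iff[OF c] by simp
qed

lemma spectrum_add_scal_one: "\<mu> \<in> spectrum (x + scal c 1) \<longleftrightarrow> \<mu> - c \<in> spectrum x"
  unfolding spectrum_def by (simp add: scal_diff_left algebra_simps)

lemma spectrum_scal_one_diff: "\<mu> \<in> spectrum (scal c 1 - x) \<longleftrightarrow> c - \<mu> \<in> spectrum x"
proof -
  have "scal c 1 - x - scal \<mu> 1 = - (x - scal (c - \<mu>) 1)" by (simp add: scal_diff_left algebra_simps)
  thus ?thesis unfolding spectrum_def mem_Collect_eq by (simp only: invertible_elem_minus_iff)
qed

lemma spectrum_mult_commute: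
  assumes m: "\<mu> \<in> spectrum (x * y)" and nz: "\<mu> \<noteq> 0"
  shows "\<mu> \<in> spectrum (y * x)"
proof -
  have eq: "z * w - scal \<mu> 1 = scal (- \<mu>) (1 - scal (1/\<mu>) z * w)" for z w
    using nz by (simp add: scal_diff_right scal_scal scal_minus_left scal_mult_left[symmetric])
  have "\<not> invertible_elem (x * y - scal \<mu> 1)" using m unfolding spectrum_def by simp
  hence n1: "\<not> invertible_elem (1 - scal (1/\<mu>) x * y)"
    using invertible_elem_scal[of "-\<mu>"] nz eq[of x y] by auto
  have "\<not> invertible_elem (1 - y * scal (1/\<mu>) x)"
    using invertible_one_minus_commute[of y "scal (1/\<mu>) x"] n1 by blast
  moreover have "y * scal (1/\<mu>) x = scal (1/\<mu>) y * x" by (simp add: scal_mult_left[symmetric] scal_mult_right[symmetric])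
  ultimately have n2: "\<not> invertible_elem (1 - scal (1/\<mu>) y * x)" by simp
  have "\<not> invertible_elem (y * x - scal \<mu> 1)"
  proof
    assume "invertible_elem (y * x - scal \<mu> 1)"
    hence "invertible_elem (scal (- 1/\<mu>) (y * x - scal \<mu> 1))" using nz by (intro invertible_elem_scal) auto
    moreover have "scal (- 1/\<mu>) (y * x - scal \<mu> 1) = 1 - scal (1/\<mu>) y * x"
      using nz by (simp add: scal_diff_right scal_scal scal_mult_left[symmetric] scal_minus_left)
    ultimately show False using n2 by simp
  qed
  thus ?thesis unfolding spectrum_def by simp
qed

end

section \<open>The Hahn--Banach theorem\<close>

text \<open>A real functional dominated by the norm is handled through its graph, so that
  Zorn's lemma applies to graphs ordered by inclusion.\<close>

definition dominated_graph :: "'a::real_normed_vector set \<Rightarrow> ('a \<Rightarrow> real) \<Rightarrow> ('a \<times> real) set \<Rightarrow> bool" where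
  "dominated_graph D0 f0 G \<longleftrightarrow>
     (\<forall>x y z. (x,y) \<in> G \<longrightarrow> (x,z) \<in> G \<longrightarrow> y = z) \<and>
     (\<forall>x a y b. (x,a) \<in> G \<longrightarrow> (y,b) \<in> G \<longrightarrow> (x + y, a + b) \<in> G) \<and>
     (\<forall>x a r. (x,a) \<in> G \<longrightarrow> (r *\<^sub>R x, r * a) \<in> G) \<and>
     (\<forall>x a. (x,a) \<in> G \<longrightarrow> a \<le> norm x) \<and>
     (\<forall>x\<in>D0. (x, f0 x) \<in> G)"

lemma dominated_graphD:
  assumes "dominated_graph D0 f0 G"
  shows "\<And>x y z. (x,y) \<in> G \<Longrightarrow> (x,z) \<in> G \<Longrightarrow> y = z"
   and "\<And>x a y b. (x,a) \<in> G \<Longrightarrow> (y,b) \<in> G \<Longrightarrow> (x + y, a + b) \<in> G"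
   and "\<And>x a r. (x,a) \<in> G \<Longrightarrow> (r *\<^sub>R x, r * a) \<in> G"
   and "\<And>x a. (x,a) \<in> G \<Longrightarrow> a \<le> norm x"
   and "\<And>x. x \<in> D0 \<Longrightarrow> (x, f0 x) \<in> G"
  using assms unfolding dominated_graph_def by blast+

lemma dominated_graph_Union_chain:
  assumes ne: "C \<noteq> {}" and dom: "\<And>G. G \<in> C \<Longrightarrow> dominated_graph D0 f0 G"
    and chain: "\<And>G H. G \<in> C \<Longrightarrow> H \<in> C \<Longrightarrow> G \<subseteq> H \<or> H \<subseteq> G"
  shows "dominated_graph D0 f0 (\<Union>C)"
  unfolding dominated_graph_def
proof (intro conjI allI impI ballI)
  fix x y z assume "(x, y) \<in> \<Union>C" "(x, z) \<in> \<Union>C"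
  then obtain G H where "G \<in> C" "H \<in> C" "(x,y) \<in> G" "(x,z) \<in> H" by blast
  thus "y = z" using chain[of G H] dominated_graphD(1)[OF dom] by blast
next
  fix x a y b assume "(x, a) \<in> \<Union>C" "(y, b) \<in> \<Union>C"
  then obtain G H where "G \<in> C" "H \<in> C" "(x,a) \<in> G" "(y,b) \<in> H" by blast
  thus "(x + y, a + b) \<in> \<Union>C" using chain[of G H] dominated_graphD(2)[OF dom] by blast
next
  fix x a r assume "(x, a) \<in> \<Union>C"
  thus "(r *\<^sub>R x, r * a) \<in> \<Union>C" using dominated_graphD(3)[OF dom] by blast
next
  fix x a assume "(x, a) \<in> \<Union>C"
  thus "a \<le> norm x" using dominated_graphD(4)[OF dom] by blast
next
  fix x assume "x \<in> D0"
  thus "(x, f0 x) \<in> \<Union>C" using ne dominated_graphD(5)[OF dom] by blast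
qed

lemma dominated_graph_extension_constant:
  assumes M: "dominated_graph D0 f0 M" and z: "(0, 0) \<in> M"
  obtains c where "\<And>y a. (y,a) \<in> M \<Longrightarrow> a - norm (y - x0) \<le> c"
    and "\<And>w b. (w,b) \<in> M \<Longrightarrow> c \<le> norm (w + x0) - b"
proof -
  define L where "L = {a - norm (y - x0) | y a. (y,a) \<in> M}"
  have key: "a - norm (y - x0) \<le> norm (w + x0) - b" if "(y,a) \<in> M" "(w,b) \<in> M" for y a w b
  proof -
    have "a + b \<le> norm (y + w)" using dominated_graphD(4,2)[OF M] that by blast
    also have "\<dots> = norm ((y - x0) + (w + x0))" by (simp add: algebra_simps)
    also have "\<dots> \<le> norm (y - x0) + norm (w + x0)" by (rule norm_triangle_ineq)
    finally show ?thesis by simp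
  qed
  have "L \<noteq> {}" using z unfolding L_def by blast
  moreover have "bdd_above L" unfolding bdd_above_def L_def using key[OF _ z] by auto
  ultimately show ?thesis
    using that[of "Sup L"] cSup_upper cSup_least key unfolding L_def by (smt (verit) mem_Collect_eq)
qed

lemma le_norm_add_line:
  fixes y x0 :: "'a::real_normed_vector"
  assumes lower: "\<And>r. r > 0 \<Longrightarrow> r * a - norm (r *\<^sub>R y - x0) \<le> c"
    and upper: "\<And>r. r > 0 \<Longrightarrow> c \<le> norm (r *\<^sub>R y + x0) - r * a"
    and "a \<le> norm y"
  shows "a + t * c \<le> norm (y + t *\<^sub>R x0)"
proof (cases t "0::real" rule: linorder_cases)
  case less
  have "(-t) * ((1 / (-t)) * a - norm ((1 / (-t)) *\<^sub>R y - x0)) \<le> (-t) * c"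
    using lower[of "1 / (-t)"] less by (intro mult_left_mono) auto
  also have "(-t) * ((1 / (-t)) * a - norm ((1 / (-t)) *\<^sub>R y - x0)) = a - norm ((-t) *\<^sub>R ((1 / (-t)) *\<^sub>R y - x0))"
    using less by (simp add: right_diff_distrib)
  also have "(-t) *\<^sub>R ((1 / (-t)) *\<^sub>R y - x0) = y + t *\<^sub>R x0"
    using less by (simp add: scaleR_diff_right)
  finally show ?thesis by simp
next
  case greater
  have "t * c \<le> t * (norm ((1 / t) *\<^sub>R y + x0) - (1 / t) * a)"
    using upper[of "1 / t"] greater by simp
  also have "\<dots> = norm (t *\<^sub>R ((1 / t) *\<^sub>R y + x0)) - a"
    using greater by (simp add: right_diff_distrib)
  also have "t *\<^sub>R ((1 / t) *\<^sub>R y + x0) = y + t *\<^sub>R x0"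
    using greater by (simp add: scaleR_add_right)
  finally show ?thesis by simp
qed (use assms in simp)

lemma dominated_graph_line_coordinates_unique:
  assumes M: "dominated_graph D0 f0 M" and x0: "x0 \<notin> fst ` M"
    and "(y,a) \<in> M" "(y',a') \<in> M" "y + t *\<^sub>R x0 = y' + t' *\<^sub>R x0"
  shows "t = t'" and "y = y'"
proof -
  show "t = t'"
  proof (rule ccontr)
    assume tt: "t \<noteq> t'"
    have "(t - t') *\<^sub>R x0 = y' - y" using assms(5) by (simp add: algebra_simps)
    hence "(1 / (t - t')) *\<^sub>R ((t - t') *\<^sub>R x0) = (1 / (t - t')) *\<^sub>R (y' - y)" by simp
    hence "x0 = (1 / (t - t')) *\<^sub>R (y' - y)" using tt by simp
    also have "\<dots> = (1 / (t - t')) *\<^sub>R y' + (- 1 / (t - t')) *\<^sub>R y" by (simp add: algebra_simps)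
    finally have "(x0, (1 / (t - t')) * a' + (- 1 / (t - t')) * a) \<in> M"
      using dominated_graphD(2,3)[OF M] assms(3,4) by metis
    thus False using x0 by force
  qed
  thus "y = y'" using assms(5) by simp
qed

lemma dominated_graph_add_line:
  assumes M: "dominated_graph D0 f0 M" and x0: "x0 \<notin> fst ` M"
    and c1: "\<And>y a. (y,a) \<in> M \<Longrightarrow> a - norm (y - x0) \<le> c"
    and c2: "\<And>w b. (w,b) \<in> M \<Longrightarrow> c \<le> norm (w + x0) - b"
  shows "dominated_graph D0 f0 {(y + t *\<^sub>R x0, a + t * c) | y a t. (y,a) \<in> M}"
    (is "dominated_graph D0 f0 ?M'")
  unfolding dominated_graph_def
proof (intro conjI allI impI ballI)
  note add = dominated_graphD(2)[OF M] and scl = dominated_graphD(3)[OF M]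
  fix x p q assume "(x, p) \<in> ?M'" "(x, q) \<in> ?M'"
  then obtain y a t y' a' t' where 1: "(y,a) \<in> M" "x = y + t *\<^sub>R x0" "p = a + t * c"
    and 2: "(y',a') \<in> M" "x = y' + t' *\<^sub>R x0" "q = a' + t' * c" by blast
  have "y + t *\<^sub>R x0 = y' + t' *\<^sub>R x0" using 1(2) 2(2) by simp
  from dominated_graph_line_coordinates_unique[OF M x0 1(1) 2(1) this]
  show "p = q" using dominated_graphD(1)[OF M] 1 2 by auto
next
  fix x p w q assume "(x, p) \<in> ?M'" "(w, q) \<in> ?M'"
  then obtain y a t y' a' t' where 1: "(y,a) \<in> M" "x = y + t *\<^sub>R x0" "p = a + t * c"
    and 2: "(y',a') \<in> M" "w = y' + t' *\<^sub>R x0" "q = a' + t' * c" by blast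
  have "x + w = (y + y') + (t + t') *\<^sub>R x0" "p + q = (a + a') + (t + t') * c"
    using 1 2 by (simp_all add: algebra_simps)
  thus "(x + w, p + q) \<in> ?M'" using dominated_graphD(2)[OF M 1(1) 2(1)] by blast
next
  fix x p r assume "(x, p) \<in> ?M'"
  then obtain y a t where 1: "(y,a) \<in> M" "x = y + t *\<^sub>R x0" "p = a + t * c" by blast
  have "r *\<^sub>R x = r *\<^sub>R y + (r * t) *\<^sub>R x0" "r * p = r * a + (r * t) * c"
    using 1 by (simp_all add: algebra_simps)
  thus "(r *\<^sub>R x, r * p) \<in> ?M'" using dominated_graphD(3)[OF M 1(1)] by blast
next
  fix x p assume "(x, p) \<in> ?M'"
  then obtain y a t where 1: "(y,a) \<in> M" "x = y + t *\<^sub>R x0" "p = a + t * c" by blast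
  show "p \<le> norm x" unfolding 1(2,3)
    by (rule le_norm_add_line) (use c1 c2 dominated_graphD(3,4)[OF M] 1(1) in auto)
next
  fix x assume "x \<in> D0"
  hence "(x + 0 *\<^sub>R x0, f0 x + 0 * c) \<in> ?M'" using dominated_graphD(5)[OF M] by blast
  thus "(x, f0 x) \<in> ?M'" by simp
qed

lemma dominated_graph_extend:
  fixes M :: "('a::real_normed_vector \<times> real) set"
  assumes M: "dominated_graph D0 f0 M" and z: "(0, 0) \<in> M" and x0: "x0 \<notin> fst ` M"
  shows "\<exists>M'. dominated_graph D0 f0 M' \<and> M \<subseteq> M' \<and> M' \<noteq> M"
proof -
  obtain c where c1: "\<And>y a. (y,a) \<in> M \<Longrightarrow> a - norm (y - x0) \<le> c"
    and c2: "\<And>w b. (w,b) \<in> M \<Longrightarrow> c \<le> norm (w + x0) - b"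
    using dominated_graph_extension_constant[OF M z] by blast
  define M' where "M' = {(y + t *\<^sub>R x0, a + t * c) | y a t. (y,a) \<in> M}"
  have "M \<subseteq> M'"
  proof
    fix p assume "p \<in> M"
    moreover obtain y a where "p = (y,a)" by (cases p)
    ultimately have "(y + 0 *\<^sub>R x0, a + 0 * c) \<in> M'" unfolding M'_def by blast
    thus "p \<in> M'" using \<open>p = (y,a)\<close> by simp
  qed
  moreover have "(0 + 1 *\<^sub>R x0, 0 + 1 * c) \<in> M'" using z unfolding M'_def by blast
  hence "(x0, c) \<in> M' - M" using x0 by force
  ultimately show ?thesis
    using dominated_graph_add_line[OF M x0 c1 c2] unfolding M'_def by blast
qed

theorem real_hahn_banach:
  fixes D0 :: "'a::real_normed_vector set" and f0 :: "'a \<Rightarrow> real"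
  assumes D0: "0 \<in> D0" "\<And>x y. x \<in> D0 \<Longrightarrow> y \<in> D0 \<Longrightarrow> x + y \<in> D0" "\<And>x r. x \<in> D0 \<Longrightarrow> r *\<^sub>R x \<in> D0"
    and lin: "\<And>x y. x \<in> D0 \<Longrightarrow> y \<in> D0 \<Longrightarrow> f0 (x + y) = f0 x + f0 y"
      "\<And>x r. x \<in> D0 \<Longrightarrow> f0 (r *\<^sub>R x) = r * f0 x"
    and bd: "\<And>x. x \<in> D0 \<Longrightarrow> f0 x \<le> norm x"
  shows "\<exists>F. (\<forall>x y. F (x + y) = F x + F y) \<and> (\<forall>r x. F (r *\<^sub>R x) = r * F x) \<and>
             (\<forall>x. F x \<le> norm x) \<and> (\<forall>x\<in>D0. F x = f0 x)"
proof -
  define A where "A = {G. dominated_graph D0 f0 G}"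
  have "dominated_graph D0 f0 {(x, f0 x) | x. x \<in> D0}"
    unfolding dominated_graph_def using D0 lin bd by force
  hence G0: "{(x, f0 x) | x. x \<in> D0} \<in> A" unfolding A_def by simp
  have "\<forall>C\<in>chains A. \<exists>U\<in>A. \<forall>X\<in>C. X \<subseteq> U"
  proof
    fix C assume C: "C \<in> chains A"
    show "\<exists>U\<in>A. \<forall>X\<in>C. X \<subseteq> U"
    proof (cases "C = {}")
      case False
      have "dominated_graph D0 f0 (\<Union>C)"
        using False chainsD[OF C] chainsD2[OF C] unfolding A_def
        by (intro dominated_graph_Union_chain) auto
      thus ?thesis unfolding A_def by blast
    qed (use G0 in blast)
  qed
  from Zorn_Lemma2[OF this] obtain M where "M \<in> A" and max: "\<forall>X\<in>A. M \<subseteq> X \<longrightarrow> X = M" by blast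
  hence M: "dominated_graph D0 f0 M" unfolding A_def by simp
  have "(0, f0 0) \<in> M" using dominated_graphD(5)[OF M] D0(1) by blast
  hence z: "(0, 0) \<in> M" using lin(2)[OF D0(1), of 0] by simp
  have full: "x \<in> fst ` M" for x
    using dominated_graph_extend[OF M z] max unfolding A_def by blast
  define F where "F x = (THE a. (x,a) \<in> M)" for x
  have Feq: "F x = a" if "(x,a) \<in> M" for x a
    unfolding F_def using that dominated_graphD(1)[OF M] by blast
  have Fin: "(x, F x) \<in> M" for x
    using full[of x] Feq by force
  show ?thesis
    using Feq[OF dominated_graphD(2)[OF M Fin Fin]] Feq[OF dominated_graphD(3)[OF M Fin]]
      dominated_graphD(4)[OF M Fin] Feq[OF dominated_graphD(5)[OF M]] by metis
qed

context unital_cstar_algebra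
begin

definition contractive_functional :: "('a \<Rightarrow> complex) \<Rightarrow> bool" where
  "contractive_functional F \<longleftrightarrow> clinear_functional scal F \<and> (\<forall>y. cmod (F y) \<le> norm y)"

lemma contractive_functionalD:
  assumes "contractive_functional F"
  shows "clinear_functional scal F" and "cmod (F y) \<le> norm y"
  using assms unfolding contractive_functional_def by auto

lemma contractive_functional_bounded_linear:
  assumes "contractive_functional F" shows "bounded_linear F"
proof (rule bounded_linear_intro[where K=1])
  show "F (x + y) = F x + F y" for x y using contractive_functionalD(1)[OF assms] clinear_add by blast
  show "F (r *\<^sub>R x) = r *\<^sub>R F x" for r x using contractive_functionalD(1)[OF assms] clinear_scaleR
    by (simp add: scaleR_conv_of_real)
  show "norm (F x) \<le> norm x * 1" for x using contractive_functionalD(2)[OF assms] by simp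
qed

lemma scal_decomp: "scal c x = Re c *\<^sub>R x + Im c *\<^sub>R scal \<i> x"
proof -
  have "c = complex_of_real (Re c) + complex_of_real (Im c) * \<i>" by (simp add: complex_eq_iff)
  hence "scal c x = scal (complex_of_real (Re c)) x + scal (complex_of_real (Im c)) (scal \<i> x)"
    by (metis scal_add_left scal_scal)
  thus ?thesis by (simp add: scal_of_real)
qed

text \<open>The norm bound passes from \<open>F0\<close> to its complexification by rotating the argument so
  that the value becomes real and nonnegative.\<close>

lemma contractive_complexification:
  assumes add: "\<And>x y. F0 (x + y) = F0 x + F0 y" and scl: "\<And>r x. F0 (r *\<^sub>R x) = r * F0 x"
    and bd: "\<And>x. F0 x \<le> norm x"
  shows "contractive_functional (\<lambda>x. Complex (F0 x) (- F0 (scal \<i> x)))"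
proof -
  define F where "F x = Complex (F0 x) (- F0 (scal \<i> x))" for x
  have F0s: "F0 (scal c x) = Re c * F0 x + Im c * F0 (scal \<i> x)" for c x
    using add scl scal_decomp[of c x] by simp
  have Fscal: "F (scal c x) = c * F x" for c x
  proof -
    have "F0 (scal \<i> (scal c x)) = F0 (scal (\<i> * c) x)" by (simp add: scal_scal)
    also have "\<dots> = - Im c * F0 x + Re c * F0 (scal \<i> x)" using F0s[of "\<i> * c" x] by simp
    finally show ?thesis unfolding F_def using F0s[of c x] by (simp add: complex_eq_iff algebra_simps)
  qed
  have "F (x + y) = F x + F y" for x y
    unfolding F_def using add by (simp add: scal_add_right complex_eq_iff)
  hence "clinear_functional scal F" unfolding clinear_functional_def using Fscal by blast
  moreover have "cmod (F x) \<le> norm x" for x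
  proof (cases "F x = 0")
    case False
    define u where "u = cnj (F x) / complex_of_real (cmod (F x))"
    have "cnj (F x) * F x = complex_of_real ((cmod (F x))\<^sup>2)"
      using complex_norm_square[of "F x"] by (simp add: mult.commute)
    hence "F (scal u x) = complex_of_real ((cmod (F x))\<^sup>2 / cmod (F x))"
      unfolding Fscal u_def by simp
    hence "cmod (F x) = F0 (scal u x)"
      using False by (simp add: F_def power2_eq_square complex_eq_iff)
    also have "\<dots> \<le> norm (scal u x)" by (rule bd)
    also have "\<dots> = norm x" using False by (simp add: u_def norm_scal norm_divide)
    finally show ?thesis .
  qed simp
  ultimately show ?thesis unfolding contractive_functional_def F_def by blast
qed

theorem complex_hahn_banach:
  fixes V :: "'a set" and f :: "'a \<Rightarrow> complex"
  assumes V: "0 \<in> V" "\<And>x y. x \<in> V \<Longrightarrow> y \<in> V \<Longrightarrow> x + y \<in> V" "\<And>c x. x \<in> V \<Longrightarrow> scal c x \<in> V"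
    and lin: "\<And>x y. x \<in> V \<Longrightarrow> y \<in> V \<Longrightarrow> f (x + y) = f x + f y"
      "\<And>c x. x \<in> V \<Longrightarrow> f (scal c x) = c * f x"
    and bd: "\<And>x. x \<in> V \<Longrightarrow> cmod (f x) \<le> norm x"
  obtains F where "contractive_functional F" and "\<And>x. x \<in> V \<Longrightarrow> F x = f x"
proof -
  have Vr: "\<And>x r. x \<in> V \<Longrightarrow> r *\<^sub>R x \<in> V" using V(3) by (metis scal_of_real)
  have "Re (f (r *\<^sub>R x)) = r * Re (f x)" if "x \<in> V" for x r
    using lin(2)[OF that, of "complex_of_real r"] by (simp add: scal_of_real)
  moreover have "Re (f x) \<le> norm x" if "x \<in> V" for x
    using bd[OF that] complex_Re_le_cmod order_trans by blast
  ultimately obtain F0 where F0: "\<forall>x y. F0 (x + y) = F0 x + F0 y" "\<forall>r x. F0 (r *\<^sub>R x) = r * F0 x"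
      "\<forall>x. F0 x \<le> norm x" "\<forall>x\<in>V. F0 x = Re (f x)"
    using real_hahn_banach[of V "\<lambda>x. Re (f x)"] V(1,2) Vr lin(1) by auto
  have "Complex (F0 x) (- F0 (scal \<i> x)) = f x" if "x \<in> V" for x
    using F0(4) V(3)[OF that] lin(2)[OF that, of \<i>] that by (simp add: complex_eq_iff)
  thus ?thesis using that contractive_complexification[of F0] F0(1-3) by blast
qed

text \<open>The prescribed values are automatically consistent: the norm bound applied to a
  vanishing combination forces the corresponding combination of values to vanish.\<close>

lemma contractive_functional_on_span2:
  assumes bound: "\<And>a b. cmod (a * \<alpha> + b * \<beta>) \<le> norm (scal a u + scal b v)"
  obtains F where "contractive_functional F" "F u = \<alpha>" "F v = \<beta>"
proof -
  define V where "V = {scal a u + scal b v | a b. True}"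
  have wd: "a * \<alpha> + b * \<beta> = a' * \<alpha> + b' * \<beta>"
    if "scal a u + scal b v = scal a' u + scal b' v" for a b a' b'
  proof -
    have "scal (a - a') u + scal (b - b') v = 0" using that by (simp add: scal_diff_left algebra_simps)
    thus ?thesis using bound[of "a - a'" "b - b'"] by (simp add: algebra_simps)
  qed
  define f where "f w = (SOME c. \<exists>a b. w = scal a u + scal b v \<and> c = a * \<alpha> + b * \<beta>)" for w
  have fv: "f (scal a u + scal b v) = a * \<alpha> + b * \<beta>" for a b
    unfolding f_def
  proof (rule some_equality)
    fix c assume "\<exists>a' b'. scal a u + scal b v = scal a' u + scal b' v \<and> c = a' * \<alpha> + b' * \<beta>"
    thus "c = a * \<alpha> + b * \<beta>" using wd by metis
  qed (rule exI[of _ a], rule exI[of _ b], simp)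
  have sum: "(scal a u + scal b v) + (scal a' u + scal b' v) = scal (a + a') u + scal (b + b') v"
    for a b a' b' by (simp add: scal_add_left algebra_simps)
  have mult: "scal c (scal a u + scal b v) = scal (c * a) u + scal (c * b) v" for c a b
    by (simp add: scal_add_right scal_scal)
  obtain F where F: "contractive_functional F" "\<And>w. w \<in> V \<Longrightarrow> F w = f w"
  proof (rule complex_hahn_banach[of V f])
    show "0 \<in> V" unfolding V_def by (rule CollectI, rule exI[of _ 0], rule exI[of _ 0]) simp
    fix x y assume "x \<in> V" "y \<in> V"
    then obtain a b a' b' where xy: "x = scal a u + scal b v" "y = scal a' u + scal b' v"
      unfolding V_def by blast
    show "x + y \<in> V" unfolding xy sum V_def by blast
    show "f (x + y) = f x + f y" unfolding xy sum fv by (simp add: algebra_simps)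
    show "scal c x \<in> V" for c unfolding xy mult V_def by blast
    show "f (scal c x) = c * f x" for c unfolding xy mult fv by (simp add: algebra_simps)
    show "cmod (f x) \<le> norm x" unfolding xy fv by (rule bound)
  qed (rule that)
  have "u = scal 1 u + scal 0 v" "v = scal 0 u + scal 1 v" by simp_all
  hence "u \<in> V" "v \<in> V" unfolding V_def by blast+
  moreover have "f u = \<alpha>" "f v = \<beta>" using fv[of 1 0] fv[of 0 1] by simp_all
  ultimately show ?thesis using that F by simp
qed

lemma norming_functional:
  obtains F where "contractive_functional F" "F y = complex_of_real (norm y)"
  by (rule contractive_functional_on_span2[of "complex_of_real (norm y)" 0 y 0])
     (simp_all add: norm_scal norm_mult)

theorem spectrum_value_functional:
  assumes mu: "\<mu> \<in> spectrum x"
  obtains F where "contractive_functional F" "F 1 = 1" "F x = \<mu>"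
proof (rule contractive_functional_on_span2)
  fix a b
  show "cmod (a * 1 + b * \<mu>) \<le> norm (scal a 1 + scal b x)"
  proof (cases "b = 0")
    case False
    have "scal a 1 + scal b x - scal (a + b * \<mu>) 1 = scal b (x - scal \<mu> 1)"
      by (simp add: scal_diff_right scal_add_left scal_scal algebra_simps)
    moreover have "\<not> invertible_elem (scal b (x - scal \<mu> 1))"
    proof
      assume "invertible_elem (scal b (x - scal \<mu> 1))"
      from invertible_elem_scal[of "1/b", OF _ this]
      show False using mu False unfolding spectrum_def by (simp add: scal_scal)
    qed
    ultimately have "a + b * \<mu> \<in> spectrum (scal a 1 + scal b x)" unfolding spectrum_def by simp
    thus ?thesis using spectrum_norm_le by simp
  qed (simp add: norm_scal)
qed

lemma norm_sa_plus_imaginary: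
  assumes sa: "star h = h"
  shows "(norm (h + scal (\<i> * complex_of_real t) 1))\<^sup>2 \<le> (norm h)\<^sup>2 + t * t"
proof -
  define c where "c = \<i> * complex_of_real t"
  define y where "y = h + scal c 1"
  have sy: "star y = h - scal c 1"
    unfolding y_def c_def using sa by (simp add: star_add star_scal scal_minus_left)
  have "(h - scal c 1) * (h + scal c 1) = h * h - scal (c * c) 1"
    by (simp add: algebra_simps scal_one_mult mult_scal_one scal_mult_both scal_diff_right scal_scal)
  also have "c * c = - complex_of_real (t * t)" unfolding c_def by (simp add: algebra_simps)
  finally have "star y * y = h * h + scal (complex_of_real (t * t)) 1"
    unfolding sy unfolding y_def by (simp add: scal_minus_left)
  hence "(norm y)\<^sup>2 = norm (h * h + scal (complex_of_real (t * t)) 1)" by (simp add: cstar_identity[symmetric])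
  also have "\<dots> \<le> norm (h * h) + t * t"
    using norm_triangle_ineq[of "h * h" "scal (complex_of_real (t * t)) 1"] by (simp add: norm_mult)
  also have "\<dots> \<le> (norm h)\<^sup>2 + t * t" using norm_mult_ineq[of h h] by (simp add: power2_eq_square)
  finally show ?thesis unfolding y_def c_def .
qed

text \<open>If \<open>F h = a + i b\<close> with \<open>b \<noteq> 0\<close>, then \<open>F (h + i t) = a + i (b + t)\<close>, whose modulus grows
  like \<open>|t| + sign(t) b\<close> while \<open>\<parallel>h + i t\<parallel>\<close> grows only like \<open>|t|\<close>.\<close>

lemma contractive_unital_sa_real:
  assumes F: "contractive_functional F" "F 1 = 1" and sa: "star h = h"
  shows "Im (F h) = 0"
proof (rule ccontr)
  assume b0: "Im (F h) \<noteq> 0"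
  define a where "a = Re (F h)"
  define b where "b = Im (F h)"
  define t where "t = ((norm h)\<^sup>2 + 1) / (2 * b)"
  have lin: "clinear_functional scal F" and bd: "\<And>y. cmod (F y) \<le> norm y"
    using contractive_functionalD[OF F(1)] by auto
  have "F (h + scal (\<i> * complex_of_real t) 1) = Complex a (b + t)"
    using lin F(2) by (simp add: clinear_add clinear_scal a_def b_def complex_eq_iff)
  hence "(cmod (Complex a (b + t)))\<^sup>2 \<le> (norm (h + scal (\<i> * complex_of_real t) 1))\<^sup>2"
    using bd by (metis norm_ge_zero power_mono)
  also have "\<dots> \<le> (norm h)\<^sup>2 + t * t" by (rule norm_sa_plus_imaginary[OF sa])
  finally have "a\<^sup>2 + (b + t)\<^sup>2 \<le> (norm h)\<^sup>2 + t * t" by (simp add: cmod_def)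
  hence "2 * b * t \<le> (norm h)\<^sup>2 - a\<^sup>2 - b\<^sup>2" by (simp add: power2_eq_square algebra_simps)
  moreover have "2 * b * t = (norm h)\<^sup>2 + 1" unfolding t_def using b0 b_def by simp
  ultimately show False by (smt (verit) zero_le_power2)
qed

lemma spectrum_sa_Im:
  assumes "star h = h" and "\<mu> \<in> spectrum h"
  shows "Im \<mu> = 0"
  using assms contractive_unital_sa_real spectrum_value_functional by metis

lemma spectrum_sa_real: "star h = h \<Longrightarrow> \<mu> \<in> spectrum h \<Longrightarrow> \<mu> = complex_of_real (Re \<mu>)"
  using spectrum_sa_Im[of h \<mu>] by (simp add: complex_eq_iff)

end

section \<open>The norm of a self-adjoint element is a spectral value\<close>

lemma open_superset_cball_one_enlarge:
  fixes U :: "'a::{real_normed_vector,heine_borel} set"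
  assumes U: "open U" and cb: "cball 0 1 \<subseteq> U"
  obtains r where "r > 1" "cball 0 r \<subseteq> U"
proof -
  obtain e where e: "e > 0" "(\<Union>x\<in>cball 0 1. ball x e) \<subseteq> U"
    using compact_subset_open_imp_ball_epsilon_subset[OF compact_cball U cb] by blast
  have "cball 0 (1 + e/2) \<subseteq> U"
  proof
    fix z :: 'a assume z: "z \<in> cball 0 (1 + e/2)"
    show "z \<in> U"
    proof (cases "norm z \<le> 1")
      case True thus ?thesis using e by fastforce
    next
      case False
      define x where "x = (1 / norm z) *\<^sub>R z"
      have x: "x \<in> cball 0 1" using False unfolding x_def by simp
      have "z - x = (1 - 1 / norm z) *\<^sub>R z" unfolding x_def by (simp add: algebra_simps)
      hence "norm (z - x) = \<bar>1 - 1 / norm z\<bar> * norm z" by simp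
      also have "\<dots> = (1 - 1 / norm z) * norm z" using False by (simp add: abs_of_nonneg field_simps)
      also have "\<dots> = norm z - 1" using False by (cases "z = 0") (simp_all add: field_simps)
      finally have "dist x z = norm z - 1" by (simp add: dist_norm norm_minus_commute)
      hence "z \<in> ball x e" using z e by simp
      thus ?thesis using e x by blast
    qed
  qed
  thus ?thesis using that[of "1 + e/2"] e by simp
qed

context unital_cstar_algebra
begin

text \<open>We work with \<open>(1 - z k)\<^sup>-\<^sup>1\<close> rather than the usual resolvent \<open>(k - z)\<^sup>-\<^sup>1\<close>: it is defined on
  a neighbourhood of \<open>0\<close>, where it is the sum of the Neumann series \<open>\<Sum> z\<^sup>n k\<^sup>n\<close>, so Cauchy's
  estimates bound \<open>\<parallel>k\<^sup>n\<parallel>\<close> as long as the function stays holomorphic.\<close>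

definition inv_resolvent :: "'a \<Rightarrow> complex \<Rightarrow> 'a" where
  "inv_resolvent k z = inverse_elem (1 - scal z k)"

lemma continuous_one_minus_scal: "continuous (at z) (\<lambda>z. 1 - scal z k)"
proof -
  have "(\<lambda>z. 1 - scal z k) = (\<lambda>z. 1 - (Re z *\<^sub>R k + Im z *\<^sub>R scal \<i> k))"
    by (rule ext) (rule arg_cong[where f="\<lambda>t. 1 - t"], rule scal_decomp)
  thus ?thesis
    by (simp add: continuous_intros linear_continuous_at[OF bounded_linear_Re]
        linear_continuous_at[OF bounded_linear_Im])
qed

lemma open_inv_resolvent_domain: "open {z. invertible_elem (1 - scal z k)}"
proof -
  have "open ((\<lambda>z. 1 - scal z k) -` {x. invertible_elem x})"
    by (intro continuous_open_vimage open_invertible_elem continuous_one_minus_scal)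
  thus ?thesis by (simp add: vimage_def)
qed

lemma isCont_inv_resolvent:
  assumes "invertible_elem (1 - scal w k)"
  shows "isCont (inv_resolvent k) w"
  unfolding inv_resolvent_def
  by (rule isCont_o2[OF continuous_one_minus_scal isCont_inverse_elem[OF assms]])

lemma inv_resolvent_diff:
  assumes iz: "invertible_elem (1 - scal z k)" and iw: "invertible_elem (1 - scal w k)"
  shows "inv_resolvent k z - inv_resolvent k w
           = scal (z - w) (inv_resolvent k z * k * inv_resolvent k w)"
proof -
  define R where "R = inv_resolvent k"
  have a: "R z * (1 - scal w k) * R w = R z"
    using inverse_elem_right[OF iw] unfolding R_def inv_resolvent_def by (simp add: mult.assoc)
  have b: "R z * (1 - scal z k) * R w = R w"
    using inverse_elem_left[OF iz] unfolding R_def inv_resolvent_def by simp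
  have "R z - R w = R z * ((1 - scal w k) - (1 - scal z k)) * R w"
    using a b by (simp add: algebra_simps)
  also have "(1 - scal w k) - (1 - scal z k) = scal (z - w) k" by (simp add: scal_diff_left)
  also have "R z * scal (z - w) k * R w = scal (z - w) (R z * k * R w)"
    by (simp add: scal_mult_left[symmetric] scal_mult_right[symmetric])
  finally show ?thesis unfolding R_def .
qed

lemma functional_inv_resolvent_has_derivative:
  assumes l: "contractive_functional l" and w: "invertible_elem (1 - scal w k)"
  shows "((\<lambda>z. l (inv_resolvent k z)) has_field_derivative
           l (inv_resolvent k w * k * inv_resolvent k w)) (at w)"
proof -
  define R where "R = inv_resolvent k"
  define U where "U = {z. invertible_elem (1 - scal z k)}"
  have lc: "clinear_functional scal l" using contractive_functionalD(1)[OF l] .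
  have "bounded_linear (\<lambda>y. l (y * (k * R w)))"
    using bounded_linear_compose[OF contractive_functional_bounded_linear[OF l]
        bounded_linear_mult_left] by simp
  hence "isCont (\<lambda>z. l (R z * (k * R w))) w"
    unfolding R_def by (rule isCont_o2[OF isCont_inv_resolvent[OF w] linear_continuous_at])
  hence lim: "((\<lambda>z. l (R z * k * R w)) \<longlongrightarrow> l (R w * k * R w)) (at w)"
    unfolding isCont_def by (simp add: mult.assoc)
  have "((\<lambda>z. (l (R z) - l (R w)) / (z - w)) \<longlongrightarrow> l (R w * k * R w)) (at w)"
  proof (rule Lim_transform_within_open[OF lim])
    show "open U" "w \<in> U" unfolding U_def using open_inv_resolvent_domain w by auto
    fix z assume z: "z \<in> U" "z \<noteq> w"
    have "l (R z) - l (R w) = (z - w) * l (R z * k * R w)"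
      using inv_resolvent_diff[of z k w] z w unfolding U_def R_def
      by (simp add: clinear_diff[OF lc, symmetric] clinear_scal[OF lc])
    thus "l (R z * k * R w) = (l (R z) - l (R w)) / (z - w)" using z by simp
  qed
  thus ?thesis unfolding R_def by (simp add: has_field_derivative_iff)
qed

lemma functional_inv_resolvent_holomorphic:
  assumes l: "contractive_functional l" and U: "U \<subseteq> {z. invertible_elem (1 - scal z k)}"
  shows "(\<lambda>z. l (inv_resolvent k z)) holomorphic_on U"
  unfolding holomorphic_on_def
proof
  fix z assume "z \<in> U"
  hence "invertible_elem (1 - scal z k)" using U by blast
  from functional_inv_resolvent_has_derivative[OF l this]
  show "(\<lambda>z. l (inv_resolvent k z)) field_differentiable at z within U"
    unfolding field_differentiable_def by (blast intro: has_field_derivative_at_within)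
qed

lemma functional_inv_resolvent_fps_expansion:
  assumes l: "contractive_functional l" and nk: "norm k \<le> 1"
  shows "(\<lambda>z. l (inv_resolvent k z)) has_fps_expansion Abs_fps (\<lambda>n. l (k ^ n))"
proof -
  have lc: "clinear_functional scal l" using contractive_functionalD(1)[OF l] .
  have expand: "(\<lambda>n. l (k ^ n) * z ^ n) sums l (inv_resolvent k z)" if "z \<in> ball 0 1" for z
  proof -
    have "cmod z * norm k \<le> cmod z" using nk by (simp add: mult_left_le)
    hence "norm (scal z k) < 1" using that by (simp add: norm_scal)
    hence "(\<lambda>n. (scal z k) ^ n) sums inv_resolvent k z"
      unfolding inv_resolvent_def by (rule neumann_series_sums)
    from bounded_linear.sums[OF contractive_functional_bounded_linear[OF l] this]
    show ?thesis using clinear_scal[OF lc] by (simp add: scal_power mult.commute)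
  qed
  have "summable (\<lambda>n. l (k ^ n) * (1/2) ^ n)"
    using expand[of "1/2"] by (auto simp: sums_iff)
  hence "ereal (norm (1/2 :: complex)) \<le> conv_radius (\<lambda>n. l (k ^ n))"
    by (rule conv_radius_geI)
  hence "0 < conv_radius (\<lambda>n. l (k ^ n))"
    by (simp add: less_le_trans[of 0 "ereal (1/2)"])
  moreover have "eventually (\<lambda>z. z \<in> ball (0::complex) 1) (nhds 0)"
    by (rule eventually_nhds_in_open) auto
  hence "eventually (\<lambda>z. eval_fps (Abs_fps (\<lambda>n. l (k ^ n))) z = l (inv_resolvent k z)) (nhds 0)"
    by (rule eventually_mono) (use expand in \<open>simp add: eval_fps_def sums_iff\<close>)
  ultimately show ?thesis
    unfolding has_fps_expansion_def fps_conv_radius_def by simp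
qed

text \<open>Cauchy's estimate on a circle of radius \<open>r\<close> inside the domain of \<open>(1 - z k)\<^sup>-\<^sup>1\<close>,
  applied to \<open>l \<circ> (1 - z k)\<^sup>-\<^sup>1\<close> for a functional \<open>l\<close> norming \<open>k\<^sup>n\<close>.\<close>

lemma norm_power_le_inv_resolvent_bound:
  assumes nk: "norm k \<le> 1" and r: "r > 0" and U: "cball 0 r \<subseteq> {z. invertible_elem (1 - scal z k)}"
    and B: "\<And>z. z \<in> sphere 0 r \<Longrightarrow> norm (inv_resolvent k z) \<le> B"
  shows "norm (k ^ n) \<le> B / r ^ n"
proof -
  obtain l where l: "contractive_functional l" "l (k ^ n) = complex_of_real (norm (k ^ n))"
    using norming_functional by blast
  define g where "g z = l (inv_resolvent k z)" for z
  have hol: "g holomorphic_on cball 0 r"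
    unfolding g_def using functional_inv_resolvent_holomorphic[OF l(1) U] .
  have "g holomorphic_on ball 0 r" using holomorphic_on_subset[OF hol ball_subset_cball] .
  moreover have "continuous_on (cball 0 r) g" using holomorphic_on_imp_continuous_on[OF hol] .
  moreover have "norm (g z) \<le> B" if "norm (0 - z) = r" for z
  proof -
    have "norm (g z) \<le> norm (inv_resolvent k z)"
      unfolding g_def by (rule contractive_functionalD(2)[OF l(1)])
    also have "\<dots> \<le> B" using B[of z] that by (simp add: dist_norm)
    finally show ?thesis .
  qed
  ultimately have cauchy: "norm ((deriv ^^ n) g 0) \<le> fact n * B / r ^ n"
    using Cauchy_inequality[of g 0 r B n] r by blast
  have "l (k ^ n) = (deriv ^^ n) g 0 / fact n"
    using fps_nth_fps_expansion[OF functional_inv_resolvent_fps_expansion[OF l(1) nk], of n]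
    unfolding g_def by simp
  hence "cmod (complex_of_real (norm (k ^ n))) = cmod ((deriv ^^ n) g 0 / fact n)"
    using l(2) by simp
  hence "norm (k ^ n) = cmod ((deriv ^^ n) g 0) / fact n" by (simp add: norm_divide)
  also have "\<dots> \<le> (fact n * B / r ^ n) / fact n" by (intro divide_right_mono cauchy) simp
  also have "\<dots> = B / r ^ n" by simp
  finally show ?thesis .
qed

lemma inv_resolvent_domain_beyond_unit_disc:
  assumes nk: "norm k = 1" and no: "\<And>\<mu>. \<mu> \<in> spectrum k \<Longrightarrow> cmod \<mu> \<noteq> 1"
  obtains r where "r > 1" "cball 0 r \<subseteq> {z. invertible_elem (1 - scal z k)}"
proof (rule open_superset_cball_one_enlarge[OF open_inv_resolvent_domain])
  show "cball 0 1 \<subseteq> {z. invertible_elem (1 - scal z k)}"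
  proof
    fix z :: complex assume "z \<in> cball 0 1"
    show "z \<in> {z. invertible_elem (1 - scal z k)}"
    proof (cases "z = 0")
      case False
      have "cmod (1/z) \<ge> 1" using \<open>z \<in> cball 0 1\<close> False by (simp add: norm_divide field_simps)
      hence "1/z \<notin> spectrum k" using no spectrum_norm_le nk by force
      hence "invertible_elem (scal (- z) (k - scal (1/z) 1))"
        using False unfolding spectrum_def by (intro invertible_elem_scal) auto
      moreover have "scal (- z) (k - scal (1/z) 1) = 1 - scal z k"
        using False by (simp add: scal_diff_right scal_scal scal_minus_left)
      ultimately show ?thesis by simp
    qed simp
  qed
qed (use that in blast)

lemma sa_unit_norm_in_spectrum:
  assumes sa: "star k = k" and nk: "norm k = 1"
  shows "\<exists>\<mu>\<in>spectrum k. cmod \<mu> = 1"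
proof (rule ccontr)
  assume "\<not> (\<exists>\<mu>\<in>spectrum k. cmod \<mu> = 1)"
  then obtain r where r: "r > 1" "cball 0 r \<subseteq> {z. invertible_elem (1 - scal z k)}"
    using inv_resolvent_domain_beyond_unit_disc[OF nk] by blast
  have "continuous_on (sphere 0 r) (inv_resolvent k)"
    using r(2) isCont_inv_resolvent by (intro continuous_at_imp_continuous_on) auto
  hence "bounded (inv_resolvent k ` sphere 0 r)"
    by (intro compact_imp_bounded compact_continuous_image compact_sphere)
  then obtain B where B: "\<And>z. z \<in> sphere 0 r \<Longrightarrow> norm (inv_resolvent k z) \<le> B"
    unfolding bounded_iff by blast
  obtain N where N: "B < r ^ N" using real_arch_pow[OF r(1)] by blast
  have "1 = norm (k ^ (2 ^ N))" using norm_sa_pow2[OF sa, of N] nk by simp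
  also have "\<dots> \<le> B / r ^ (2 ^ N)"
    using norm_power_le_inv_resolvent_bound[OF _ _ r(2) B] nk r(1) by simp
  finally have "r ^ (2 ^ N) \<le> B" using r(1) by (simp add: field_simps)
  moreover have "r ^ N \<le> r ^ (2 ^ N)"
    using r(1) by (intro power_increasing) (auto intro: less_imp_le[OF less_exp])
  ultimately show False using N by simp
qed

theorem sa_norm_in_spectrum:
  assumes sa: "star h = h"
  shows "\<exists>\<mu>\<in>spectrum h. cmod \<mu> = norm h"
proof (cases "h = 0")
  case True
  have "0 \<in> spectrum h" unfolding spectrum_def True invertible_elem_def by simp
  thus ?thesis using True by force
next
  case False
  define N where "N = complex_of_real (norm h)"
  have N: "N \<noteq> 0" using False N_def by simp
  define k where "k = scal (1 / N) h"
  have "star k = k" "norm k = 1" unfolding k_def N_def using sa False by (simp_all add: star_scal norm_scal norm_divide)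
  then obtain \<mu> where "\<mu> \<in> spectrum k" "cmod \<mu> = 1" using sa_unit_norm_in_spectrum by blast
  moreover have "scal N k = h" unfolding k_def using N by (simp add: scal_scal)
  ultimately show ?thesis using spectrum_scal[OF N, of \<mu> k] by (intro bexI[of _ "N * \<mu>"]) (auto simp: N_def norm_mult)
qed

lemma sa_norm_le_spectral_bound:
  assumes sa: "star h = h" and b: "\<And>\<mu>. \<mu> \<in> spectrum h \<Longrightarrow> cmod \<mu> \<le> t"
  shows "norm h \<le> t"
  using sa_norm_in_spectrum[OF sa] b by force

end

section \<open>Positive elements\<close>

lemma negative_point_separating_polynomial:
  fixes t0 c :: real
  assumes t0: "t0 < 0" and c: "- t0 \<le> c"
  obtains N \<epsilon> where "0 \<le> \<epsilon>" "\<epsilon> < - t0"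
    and "\<And>s. \<bar>s\<bar> \<le> c \<Longrightarrow> s * ((c - s) / (c - t0)) ^ (2 * N) \<le> \<epsilon>"
proof -
  define q where "q = c - t0"
  have cpos: "c > 0" and q: "q > c" using t0 c unfolding q_def by auto
  have "(c / q)\<^sup>2 < 1" using q cpos by (simp add: power_less_one_iff)
  moreover have "0 < (- t0) / c" using t0 cpos by (intro divide_pos_pos) auto
  ultimately obtain N where N: "((c / q)\<^sup>2) ^ N < (- t0) / c"
    using real_arch_pow_inv by blast
  define \<epsilon> where "\<epsilon> = c * (c / q) ^ (2 * N)"
  have "\<epsilon> = c * ((c / q)\<^sup>2) ^ N" unfolding \<epsilon>_def by (simp add: power_mult)
  also have "\<dots> < c * ((- t0) / c)" using N cpos by (intro mult_strict_left_mono)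
  also have "\<dots> = - t0" using cpos by simp
  finally have "\<epsilon> < - t0" .
  moreover have eps0: "0 \<le> \<epsilon>" unfolding \<epsilon>_def using cpos q by simp
  moreover have "s * ((c - s) / q) ^ (2 * N) \<le> \<epsilon>" if s: "\<bar>s\<bar> \<le> c" for s
  proof (cases "s \<le> 0")
    case True
    have "0 \<le> ((c - s) / q) ^ (2 * N)" using True cpos q by simp
    hence "s * ((c - s) / q) ^ (2 * N) \<le> 0" using True by (simp add: mult_nonpos_nonneg)
    thus ?thesis using eps0 by linarith
  next
    case False
    have "((c - s) / q) ^ (2 * N) \<le> (c / q) ^ (2 * N)"
      using False s q by (intro power_mono divide_right_mono) auto
    thus ?thesis unfolding \<epsilon>_def using False s by (intro mult_mono) auto
  qed
  ultimately show ?thesis using that unfolding q_def by blast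
qed

context unital_cstar_algebra
begin

definition positive_elem :: "'a \<Rightarrow> bool" where
  "positive_elem h \<longleftrightarrow> star h = h \<and> (\<forall>\<mu>\<in>spectrum h. Re \<mu> \<ge> 0)"

lemma positive_elem_norm_bound:
  assumes p: "positive_elem h" and t: "norm h \<le> t"
  shows "norm (scal (complex_of_real t) 1 - h) \<le> t"
proof (rule sa_norm_le_spectral_bound)
  show "star (scal (complex_of_real t) 1 - h) = scal (complex_of_real t) 1 - h"
    using p unfolding positive_elem_def by (simp add: star_diff star_scal)
next
  fix \<mu> assume "\<mu> \<in> spectrum (scal (complex_of_real t) 1 - h)"
  hence m: "complex_of_real t - \<mu> \<in> spectrum h" by (simp add: spectrum_scal_one_diff)
  have sa: "star h = h" and ge: "Re (complex_of_real t - \<mu>) \<ge> 0" using p m unfolding positive_elem_def by auto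
  have re: "complex_of_real t - \<mu> = complex_of_real (Re (complex_of_real t - \<mu>))"
    using spectrum_sa_real[OF sa m] .
  have le: "cmod (complex_of_real t - \<mu>) \<le> t" using spectrum_norm_le[OF m] t by simp
  have "Re (complex_of_real t - \<mu>) \<le> t" using le complex_Re_le_cmod order_trans by blast
  hence "\<mu> = complex_of_real (t - Re (complex_of_real t - \<mu>))" using re
    by (simp add: complex_eq_iff)
  moreover have "\<bar>t - Re (complex_of_real t - \<mu>)\<bar> \<le> t" using ge \<open>Re (complex_of_real t - \<mu>) \<le> t\<close>
    by simp
  ultimately show "cmod \<mu> \<le> t" by (metis norm_of_real)
qed

lemma positive_elemI_norm_bound:
  assumes sa: "star h = h" and t: "norm (scal (complex_of_real t) 1 - h) \<le> t"
  shows "positive_elem h"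
  unfolding positive_elem_def
proof (intro conjI ballI sa)
  fix \<mu> assume m: "\<mu> \<in> spectrum h"
  have "complex_of_real t - \<mu> \<in> spectrum (scal (complex_of_real t) 1 - h)"
    by (simp add: spectrum_scal_one_diff m)
  hence "cmod (complex_of_real t - \<mu>) \<le> t" using spectrum_norm_le t by fastforce
  hence "Re (complex_of_real t - \<mu>) \<le> t" using complex_Re_le_cmod order_trans by blast
  thus "Re \<mu> \<ge> 0" by simp
qed

lemma positive_elem_add:
  assumes a: "positive_elem a" and b: "positive_elem b" shows "positive_elem (a + b)"
proof (rule positive_elemI_norm_bound[where t="norm a + norm b"])
  show "star (a + b) = a + b" using a b by (simp add: star_add positive_elem_def)
  have "scal (complex_of_real (norm a + norm b)) 1 - (a + b)
        = (scal (complex_of_real (norm a)) 1 - a) + (scal (complex_of_real (norm b)) 1 - b)"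
    by (simp add: scal_add_left algebra_simps)
  also have "norm \<dots> \<le> norm a + norm b"
    using norm_triangle_ineq[of "scal (complex_of_real (norm a)) 1 - a" "scal (complex_of_real (norm b)) 1 - b"]
      positive_elem_norm_bound[OF a order_refl] positive_elem_norm_bound[OF b order_refl] by linarith
  finally show "norm (scal (complex_of_real (norm a + norm b)) 1 - (a + b)) \<le> norm a + norm b" .
qed

lemma positive_elem_scaleR:
  assumes p: "positive_elem h" and r: "r \<ge> 0" shows "positive_elem (r *\<^sub>R h)"
proof (rule positive_elemI_norm_bound[where t="r * norm h"])
  show "star (r *\<^sub>R h) = r *\<^sub>R h" using p by (simp add: star_scaleR positive_elem_def)
  have "scal (complex_of_real (r * norm h)) 1 - r *\<^sub>R h = r *\<^sub>R (scal (complex_of_real (norm h)) 1 - h)"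
    by (simp only: scal_of_real) (simp add: algebra_simps)
  also have "norm \<dots> \<le> r * norm h" using positive_elem_norm_bound[OF p order_refl] r
    by (simp add: mult_left_mono)
  finally show "norm (scal (complex_of_real (r * norm h)) 1 - r *\<^sub>R h) \<le> r * norm h" .
qed

lemma positive_elem_square:
  assumes sa: "star h = h" shows "positive_elem (h * h)"
  unfolding positive_elem_def
proof (intro conjI ballI)
  show "star (h * h) = h * h" using sa by (simp add: star_mult)
next
  fix \<mu> assume m: "\<mu> \<in> spectrum (h * h)"
  show "Re \<mu> \<ge> 0"
  proof (rule ccontr)
    assume neg: "\<not> Re \<mu> \<ge> 0"
    have sahh: "star (h * h) = h * h" using sa by (simp add: star_mult)
    have mre: "\<mu> = complex_of_real (Re \<mu>)" using spectrum_sa_real[OF sahh m] .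
    define s where "s = sqrt (- Re \<mu>)"
    have s: "s > 0" "s * s = - Re \<mu>" using neg unfolding s_def by auto
    define c where "c = \<i> * complex_of_real s"
    have "c \<notin> spectrum h" using spectrum_sa_Im[OF sa, of c] s unfolding c_def by auto
    hence i1: "invertible_elem (h - scal c 1)" unfolding spectrum_def by simp
    have "- c \<notin> spectrum h" using spectrum_sa_Im[OF sa, of "- c"] s unfolding c_def by auto
    hence i2: "invertible_elem (h + scal c 1)" unfolding spectrum_def by (simp add: scal_minus_left)
    have "(h - scal c 1) * (h + scal c 1) = h * h - scal (c * c) 1"
      by (simp add: algebra_simps scal_one_mult mult_scal_one scal_mult_both scal_diff_right scal_scal)
    also have "c * c = \<mu>" unfolding c_def using s mre by (simp add: complex_eq_iff algebra_simps)
    finally have "invertible_elem (h * h - scal \<mu> 1)" using invertible_elem_mult[OF i1 i2] by simp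
    thus False using m unfolding spectrum_def by simp
  qed
qed

definition poly_eval :: "complex poly \<Rightarrow> 'a \<Rightarrow> 'a" where
  "poly_eval p a = foldr (\<lambda>c y. scal c 1 + a * y) (coeffs p) 0"

lemma poly_eval_0[simp]: "poly_eval 0 a = 0"
  by (simp add: poly_eval_def)

lemma poly_eval_pCons[simp]: "poly_eval (pCons c p) a = scal c 1 + a * poly_eval p a"
  by (simp add: poly_eval_def cCons_def)

lemma poly_eval_add: "poly_eval (p + q) a = poly_eval p a + poly_eval q a"
proof (induction p q rule: poly_induct2)
  case (pCons c p d q) thus ?case by (simp add: scal_add_left algebra_simps)
qed simp

lemma poly_eval_smult: "poly_eval (smult c p) a = scal c (poly_eval p a)"
proof (induction p)
  case (pCons d p) thus ?case by (simp add: scal_add_right scal_scal scal_mult_right)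
qed simp

lemma poly_eval_mult: "poly_eval (p * q) a = poly_eval p a * poly_eval q a"
proof (induction p)
  case (pCons c p)
  have "poly_eval (pCons c p * q) a = scal c (poly_eval q a) + a * (poly_eval p a * poly_eval q a)"
    using pCons by (simp add: poly_eval_add poly_eval_smult)
  also have "\<dots> = (scal c 1 + a * poly_eval p a) * poly_eval q a"
    by (simp add: distrib_right scal_one_mult mult.assoc)
  finally show ?case by simp
qed simp

lemma poly_eval_const[simp]: "poly_eval [:c:] a = scal c 1"
  by simp

lemma poly_eval_minus: "poly_eval (- p) a = - poly_eval p a"
  using poly_eval_smult[of "-1" p a] by (simp add: scal_minus_left)

lemma poly_eval_diff: "poly_eval (p - q) a = poly_eval p a - poly_eval q a"
  using poly_eval_add[of p "-q" a] poly_eval_minus[of q a] by simp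

lemma poly_eval_linear: "poly_eval [:- z, 1:] a = a - scal z 1"
  by (simp add: scal_minus_left)

lemma poly_eval_one[simp]: "poly_eval 1 a = 1"
  by (metis one_pCons poly_eval_const scal_one)

lemma poly_eval_power: "poly_eval (p ^ n) a = poly_eval p a ^ n"
  by (induction n) (simp_all add: poly_eval_mult)

lemma poly_eval_commute: "a * poly_eval p a = poly_eval p a * a"
proof (induction p)
  case (pCons c p)
  have "a * (scal c 1 + a * poly_eval p a) = scal c a + a * (a * poly_eval p a)"
    by (simp add: distrib_left mult_scal_one)
  also have "\<dots> = scal c a + a * (poly_eval p a * a)" using pCons by simp
  also have "\<dots> = (scal c 1 + a * poly_eval p a) * a"
    by (simp add: distrib_right scal_one_mult mult.assoc)
  finally show ?case by simp
qed simp

lemma spectrum_poly_image: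
  assumes t: "t \<in> spectrum a"
  shows "poly p t \<in> spectrum (poly_eval p a)"
proof -
  have "poly (p - [:poly p t:]) t = 0" by simp
  then obtain q where q: "p - [:poly p t:] = [:- t, 1:] * q"
    unfolding poly_eq_0_iff_dvd by (auto elim: dvdE)
  have e: "poly_eval p a - scal (poly p t) 1 = (a - scal t 1) * poly_eval q a"
    using arg_cong[OF q, of "\<lambda>r. poly_eval r a"]
    by (simp add: poly_eval_diff poly_eval_mult poly_eval_linear poly_eval_smult left_diff_distrib scal_one_mult)
  have com: "(a - scal t 1) * poly_eval q a = poly_eval q a * (a - scal t 1)"
    using poly_eval_commute[of a q] by (simp add: algebra_simps scal_one_mult mult_scal_one)
  show ?thesis
  proof (rule ccontr)
    assume "poly p t \<notin> spectrum (poly_eval p a)"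
    hence "invertible_elem (poly_eval p a - scal (poly p t) 1)" unfolding spectrum_def by simp
    hence "invertible_elem ((a - scal t 1) * poly_eval q a)" using e by simp
    hence "invertible_elem (a - scal t 1)" using invertible_elem_commute_factor[OF com] by simp
    thus False using t unfolding spectrum_def by simp
  qed
qed

lemma invertible_poly_eval:
  assumes ne: "spectrum a \<noteq> {}"
  shows "(\<forall>t\<in>spectrum a. poly P t \<noteq> 0) \<Longrightarrow> invertible_elem (poly_eval P a)"
proof (induction "degree P" arbitrary: P rule: less_induct)
  case less
  show ?case
  proof (cases "degree P = 0")
    case True
    then obtain c where P: "P = [:c:]" by (metis degree_eq_zeroE)
    obtain t where "t \<in> spectrum a" using ne by blast
    hence "c \<noteq> 0" using less.prems P by auto
    thus ?thesis using P by (simp add: invertible_elem_scal)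
  next
    case False
    hence "\<not> constant (poly P)" by (simp add: constant_degree)
    then obtain z where z: "poly P z = 0" using fundamental_theorem_of_algebra by blast
    then obtain Q where Q: "P = [:- z, 1:] * Q" unfolding poly_eq_0_iff_dvd by (auto elim: dvdE)
    have Q0: "Q \<noteq> 0" using Q False by auto
    have "degree ([:- z, 1:] * Q) = degree [:- z, 1:] + degree Q" by (rule degree_mult_eq) (use Q0 in auto)
    hence dQ: "degree Q < degree P" unfolding Q[symmetric] by simp
    have "\<forall>t\<in>spectrum a. poly Q t \<noteq> 0" using less.prems Q by auto
    hence iQ: "invertible_elem (poly_eval Q a)" using less.hyps[OF dQ] by blast
    have "z \<notin> spectrum a" using less.prems z by blast
    hence iz: "invertible_elem (a - scal z 1)" unfolding spectrum_def by simp
    have "poly_eval P a = poly_eval [:- z, 1:] a * poly_eval Q a" unfolding Q by (rule poly_eval_mult)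
    hence "poly_eval P a = (a - scal z 1) * poly_eval Q a" by (simp only: poly_eval_linear)
    thus ?thesis using invertible_elem_mult[OF iz iQ] by simp
  qed
qed

lemma spectrum_poly_preimage:
  assumes ne: "spectrum a \<noteq> {}" and m: "\<mu> \<in> spectrum (poly_eval p a)"
  shows "\<exists>t\<in>spectrum a. poly p t = \<mu>"
proof (rule ccontr)
  assume "\<not> (\<exists>t\<in>spectrum a. poly p t = \<mu>)"
  hence "\<forall>t\<in>spectrum a. poly (p - [:\<mu>:]) t \<noteq> 0" by auto
  hence "invertible_elem (poly_eval (p - [:\<mu>:]) a)" by (rule invertible_poly_eval[OF ne])
  thus False using m unfolding spectrum_def by (simp add: poly_eval_diff)
qed

lemma sa_spectrum_nonempty: "star h = h \<Longrightarrow> spectrum h \<noteq> {}"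
  using sa_norm_in_spectrum by blast

lemma positive_star_mult_add_swap: "positive_elem (star z * z + z * star z)"
proof -
  obtain \<alpha> \<beta> where ab: "star \<alpha> = \<alpha>" "star \<beta> = \<beta>" "z = \<alpha> + scal \<i> \<beta>" "star z = \<alpha> - scal \<i> \<beta>"
    by (rule sa_decomposition)
  have "star z * z + z * star z
        = (\<alpha> - scal \<i> \<beta>) * (\<alpha> + scal \<i> \<beta>) + (\<alpha> + scal \<i> \<beta>) * (\<alpha> - scal \<i> \<beta>)"
    using ab(3,4) by simp
  also have "\<dots> = 2 *\<^sub>R (\<alpha> * \<alpha>) - 2 *\<^sub>R (scal \<i> \<beta> * scal \<i> \<beta>)"
    by (simp add: algebra_simps scaleR_2)
  also have "scal \<i> \<beta> * scal \<i> \<beta> = - (\<beta> * \<beta>)"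
    using scal_mult_both[of \<i> \<beta> \<i> \<beta>] by (simp add: scal_minus_left)
  finally have "star z * z + z * star z = 2 *\<^sub>R (\<alpha> * \<alpha> + \<beta> * \<beta>)" by (simp add: scaleR_add_right)
  thus ?thesis using positive_elem_scaleR[OF positive_elem_add[OF
        positive_elem_square[OF ab(1)] positive_elem_square[OF ab(2)]], of 2] by simp
qed

text \<open>An upper bound on the spectrum of \<open>z\<^sup>* z\<close> is also one for \<open>z z\<^sup>*\<close> (the two spectra agree
  away from \<open>0\<close>), while \<open>z\<^sup>* z + z z\<^sup>* \<ge> 0\<close> turns it into a lower bound \<open>-\<epsilon>\<close> for \<open>z z\<^sup>*\<close>;
  so \<open>\<parallel>z\<^sup>* z\<parallel> = \<parallel>z z\<^sup>*\<parallel> \<le> \<epsilon>\<close>, without knowing yet that \<open>z\<^sup>* z\<close> is positive.\<close>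

lemma norm_star_mult_le_spectral_bound:
  assumes eps: "\<epsilon> \<ge> 0" and up: "\<And>\<mu>. \<mu> \<in> spectrum (star z * z) \<Longrightarrow> Re \<mu> \<le> \<epsilon>"
  shows "norm (star z * z) \<le> \<epsilon>"
proof -
  define b where "b = star z * z"
  define d where "d = z * star z"
  have "positive_elem (scal (complex_of_real \<epsilon>) 1 - b)"
    unfolding positive_elem_def
  proof (intro conjI ballI)
    show "star (scal (complex_of_real \<epsilon>) 1 - b) = scal (complex_of_real \<epsilon>) 1 - b"
      unfolding b_def by (simp add: star_diff star_scal star_mult star_star)
    fix \<nu> assume "\<nu> \<in> spectrum (scal (complex_of_real \<epsilon>) 1 - b)"
    hence "complex_of_real \<epsilon> - \<nu> \<in> spectrum (star z * z)"
      unfolding b_def by (simp add: spectrum_scal_one_diff)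
    from up[OF this] show "0 \<le> Re \<nu>" by simp
  qed
  from positive_elem_add[OF positive_star_mult_add_swap[of z] this]
  have pde: "positive_elem (d + scal (complex_of_real \<epsilon>) 1)"
    unfolding b_def d_def by (simp add: algebra_simps)
  have sad: "star d = d" unfolding d_def by (simp add: star_mult star_star)
  have "cmod \<nu> \<le> \<epsilon>" if nu: "\<nu> \<in> spectrum d" for \<nu>
  proof -
    have "Re \<nu> \<le> \<epsilon>"
    proof (cases "\<nu> = 0")
      case False
      thus ?thesis using up spectrum_mult_commute[of \<nu> z "star z"] nu unfolding d_def by blast
    qed (use eps in simp)
    moreover have "\<nu> + complex_of_real \<epsilon> \<in> spectrum (d + scal (complex_of_real \<epsilon>) 1)"
      using nu by (simp add: spectrum_add_scal_one)
    hence "- \<epsilon> \<le> Re \<nu>" using pde unfolding positive_elem_def by force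
    moreover have "cmod \<nu> = \<bar>Re \<nu>\<bar>" using spectrum_sa_real[OF sad nu] by (metis norm_of_real)
    ultimately show ?thesis by simp
  qed
  hence "norm d \<le> \<epsilon>" by (rule sa_norm_le_spectral_bound[OF sad])
  moreover have "norm d = norm b"
    unfolding b_def d_def using cstar_identity[of "star z"] cstar_identity[of z] by (simp add: star_star)
  ultimately show ?thesis unfolding b_def by simp
qed

lemma Re_spectrum_poly_eval_le:
  assumes sa: "star a = a" and P: "\<And>s. \<bar>s\<bar> \<le> norm a \<Longrightarrow> Re (poly P (complex_of_real s)) \<le> \<epsilon>"
    and \<mu>: "\<mu> \<in> spectrum (poly_eval P a)"
  shows "Re \<mu> \<le> \<epsilon>"
proof -
  obtain t where t: "t \<in> spectrum a" "poly P t = \<mu>"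
    using spectrum_poly_preimage[OF sa_spectrum_nonempty[OF sa] \<mu>] by blast
  have "t = complex_of_real (Re t)" by (rule spectrum_sa_real[OF sa t(1)])
  moreover have "\<bar>Re t\<bar> \<le> norm a" by (rule order_trans[OF abs_Re_le_cmod spectrum_norm_le[OF t(1)]])
  ultimately show ?thesis using t(2) P[of "Re t"] by metis
qed

text \<open>If \<open>t\<^sub>0 < 0\<close> were a spectral value of \<open>a = x\<^sup>* x\<close>, choose a real polynomial \<open>W\<close> so that
  \<open>z = x W(a)\<close> satisfies \<open>z\<^sup>* z = a W(a)\<^sup>2\<close>, whose spectrum contains \<open>t\<^sub>0\<close> but is otherwise
  bounded above by some \<open>\<epsilon> < |t\<^sub>0|\<close>; this contradicts the previous lemma.\<close>

theorem positive_star_mult: "positive_elem (star x * x)"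
proof -
  define a where "a = star x * x"
  have saa: "star a = a" unfolding a_def by (simp add: star_mult star_star)
  show ?thesis unfolding a_def[symmetric] positive_elem_def
  proof (intro conjI ballI saa, rule ccontr)
    fix \<mu>0 assume m0: "\<mu>0 \<in> spectrum a" and "\<not> 0 \<le> Re \<mu>0"
    define t0 where "t0 = Re \<mu>0"
    have t0: "t0 < 0" and m0': "complex_of_real t0 \<in> spectrum a"
      using \<open>\<not> 0 \<le> Re \<mu>0\<close> spectrum_sa_real[OF saa m0] m0 unfolding t0_def by auto
    define c where "c = norm a"
    have c: "- t0 \<le> c" using spectrum_norm_le[OF m0'] t0 unfolding c_def by simp
    obtain \<epsilon> N where eps: "0 \<le> \<epsilon>" "\<epsilon> < - t0"
      and sep: "\<And>s. \<bar>s\<bar> \<le> c \<Longrightarrow> s * ((c - s) / (c - t0)) ^ (2 * N) \<le> \<epsilon>"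
      by (rule negative_point_separating_polynomial[OF t0 c], rule that)
    define W where "W = smult (complex_of_real (1 / (c - t0) ^ N)) ([:complex_of_real c, -1:] ^ N)"
    define P where "P = [:0, 1:] * W * W"
    have "poly W (complex_of_real s) = complex_of_real (((c - s) / (c - t0)) ^ N)" for s
      unfolding W_def by (simp add: power_divide)
    hence polyP: "poly P (complex_of_real s) = complex_of_real (s * ((c - s) / (c - t0)) ^ (2 * N))" for s
      unfolding P_def by (simp add: mult_2 power_add)
    define w where "w = poly_eval W a"
    define z where "z = x * w"
    have saw: "star w = w"
      unfolding w_def W_def using saa by (simp add: poly_eval_smult poly_eval_power scal_minus_left
          star_scal star_power star_diff)
    have "star z * z = w * a * w" unfolding z_def a_def by (simp add: star_mult saw mult.assoc)
    also have "\<dots> = a * w * w" using poly_eval_commute[of a W] unfolding w_def by simp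
    also have "\<dots> = poly_eval P a" unfolding P_def w_def by (simp add: poly_eval_mult mult.assoc)
    finally have zz: "star z * z = poly_eval P a" .
    have "poly P (complex_of_real t0) \<in> spectrum (star z * z)"
      unfolding zz by (rule spectrum_poly_image[OF m0'])
    moreover have "poly P (complex_of_real t0) = complex_of_real t0"
      unfolding polyP using t0 c by simp
    ultimately have "- t0 \<le> norm (star z * z)" using spectrum_norm_le by fastforce
    moreover have "Re \<mu> \<le> \<epsilon>" if "\<mu> \<in> spectrum (star z * z)" for \<mu>
      using Re_spectrum_poly_eval_le[OF saa _ that[unfolded zz]] sep unfolding polyP c_def by simp
    hence "norm (star z * z) \<le> \<epsilon>" by (rule norm_star_mult_le_spectral_bound[OF eps(1)])
    ultimately show False using eps(2) by simp
  qed
qed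

end

section \<open>States\<close>

lemma abs_half_gchoose_le: "\<bar>(1/2::real) gchoose k\<bar> \<le> 1"
proof (induction k)
  case (Suc k)
  have "(1/2::real) * ((1/2) gchoose k) = of_nat k * ((1/2) gchoose k) + of_nat (Suc k) * ((1/2) gchoose (Suc k))"
    by (rule gbinomial_mult_1)
  hence e: "(1/2::real) gchoose (Suc k) = ((1/2 - of_nat k) / of_nat (Suc k)) * ((1/2) gchoose k)"
    by (simp add: field_simps)
  have "\<bar>(1/2 - of_nat k) / of_nat (Suc k)\<bar> \<le> (1::real)" by (simp add: field_simps)
  hence "\<bar>(1/2::real) gchoose (Suc k)\<bar> \<le> 1 * 1"
    unfolding e abs_mult using Suc by (intro mult_mono) auto
  thus ?case by simp
qed simp

text \<open>The coefficients of the binomial series of \<open>\<surd>(1 - x)\<close> convolve to those of \<open>1 - x\<close>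
  (Vandermonde's identity with \<open>1/2 + 1/2 = 1\<close>).\<close>

lemma sqrt_one_minus_coeffs_convolution:
  "(\<Sum>i\<le>k. ((-1)^i * ((1/2::real) gchoose i)) * ((-1)^(k - i) * ((1/2) gchoose (k - i))))
     = (if k = 0 then 1 else if k = 1 then -1 else 0)"
proof -
  have "(\<Sum>i\<le>k. ((-1)^i * ((1/2::real) gchoose i)) * ((-1)^(k - i) * ((1/2) gchoose (k - i))))
        = (-1)^k * (\<Sum>i\<le>k. ((1/2::real) gchoose i) * ((1/2) gchoose (k - i)))"
    unfolding sum_distrib_left
  proof (rule sum.cong[OF refl])
    fix i assume "i \<in> {..k}"
    hence "(-1::real)^i * (-1)^(k - i) = (-1)^k" by (simp add: power_add[symmetric])
    thus "((-1)^i * ((1/2::real) gchoose i)) * ((-1)^(k - i) * ((1/2) gchoose (k - i)))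
          = (-1)^k * (((1/2) gchoose i) * ((1/2) gchoose (k - i)))"
      by (simp add: algebra_simps)
  qed
  also have "(\<Sum>i\<le>k. ((1/2::real) gchoose i) * ((1/2) gchoose (k - i))) = (1/2 + 1/2) gchoose k"
    using gbinomial_Vandermonde[of "1/2::real" "1/2" k] by (simp add: atLeast0AtMost)
  also have "(1/2 + 1/2 :: real) gchoose k = of_nat (1 choose k)"
    using binomial_gbinomial[of 1 k, where 'a=real] by simp
  finally show ?thesis by (cases k) (auto simp: binomial_eq_0)
qed

lemma sqrt_one_minus_series:
  fixes g :: "'a::{real_normed_algebra_1,banach}"
  assumes ng: "norm g < 1"
  defines "a \<equiv> \<lambda>k. ((-1)^k * ((1/2::real) gchoose k)) *\<^sub>R g ^ k"
  shows "summable a" and "suminf a * suminf a = 1 - g"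
proof -
  have "norm (a k) \<le> norm g ^ k" for k
  proof -
    have "norm (a k) = \<bar>(1/2::real) gchoose k\<bar> * norm (g ^ k)" unfolding a_def by (simp add: abs_mult)
    also have "\<dots> \<le> 1 * norm g ^ k"
      using abs_half_gchoose_le[of k] norm_power_ineq[of g k] by (intro mult_mono) auto
    finally show ?thesis by simp
  qed
  hence sna: "summable (\<lambda>k. norm (a k))"
    by (intro summable_comparison_test[OF _ summable_geometric[of "norm g"]])
       (use ng in \<open>auto intro!: exI[of _ 0]\<close>)
  thus "summable a" using summable_norm_cancel by blast
  have inner: "(\<Sum>i\<le>k. a i * a (k - i))
      = (if k = 0 then 1 else if k = 1 then -1 else 0) *\<^sub>R g ^ k" for k
  proof -
    have "(\<Sum>i\<le>k. a i * a (k - i))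
          = (\<Sum>i\<le>k. ((-1)^i * ((1/2::real) gchoose i)) * ((-1)^(k - i) * ((1/2) gchoose (k - i)))) *\<^sub>R g ^ k"
      unfolding scaleR_sum_left a_def
      by (intro sum.cong refl) (simp add: power_add[symmetric])
    thus ?thesis by (simp only: sqrt_one_minus_coeffs_convolution)
  qed
  have "(\<lambda>k. \<Sum>i\<le>k. a i * a (k - i)) sums (\<Sum>k\<in>{0,1}. (\<Sum>i\<le>k. a i * a (k - i)))"
    by (rule sums_finite) (auto simp: inner)
  hence "(\<lambda>k. \<Sum>i\<le>k. a i * a (k - i)) sums (1 - g)" by (simp add: inner)
  thus "suminf a * suminf a = 1 - g"
    using Cauchy_product[OF sna sna] by (simp add: sums_iff)
qed

context unital_cstar_algebra
begin

lemma sa_sqrt_one_minus: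
  assumes sa: "star g = g" and ng: "norm g < 1"
  obtains y where "star y = y" "y * y = 1 - g"
proof -
  define a where "a k = ((-1)^k * ((1/2::real) gchoose k)) *\<^sub>R g ^ k" for k
  have "summable a" "suminf a * suminf a = 1 - g"
    using sqrt_one_minus_series[OF ng] unfolding a_def by auto
  moreover have "star (suminf a) = suminf a"
  proof -
    have "star (suminf a) = (\<Sum>k. star (a k))"
      by (rule bounded_linear.suminf[OF bounded_linear_star \<open>summable a\<close>])
    also have "(\<lambda>k. star (a k)) = a" unfolding a_def using sa by (simp add: star_scaleR star_power)
    finally show ?thesis .
  qed
  ultimately show ?thesis using that by blast
qed

lemma state_clinear: "is_state scal star \<phi> \<Longrightarrow> clinear_functional scal \<phi>"
  unfolding is_state_def by blast

lemma state_star_mult_nonneg: "is_state scal star \<phi> \<Longrightarrow> Im (\<phi> (star x * x)) = 0 \<and> Re (\<phi> (star x * x)) \<ge> 0"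
  unfolding is_state_def by blast

lemma state_one: "is_state scal star \<phi> \<Longrightarrow> \<phi> 1 = 1"
  unfolding is_state_def by blast

text \<open>Reality of \<open>\<phi>\<close> on \<open>(1 + y)\<^sup>*(1 + y)\<close> and on \<open>(1 + i y)\<^sup>*(1 + i y)\<close> gives the imaginary and
  real parts of \<open>\<phi>(y\<^sup>*) - conj \<phi>(y)\<close>.\<close>

lemma state_star:
  assumes st: "is_state scal star \<phi>"
  shows "\<phi> (star y) = cnj (\<phi> y)"
proof -
  have cl: "clinear_functional scal \<phi>" using state_clinear[OF st] .
  have o: "\<phi> 1 = 1" using state_one[OF st] .
  have ryy: "Im (\<phi> (star y * y)) = 0" using state_star_mult_nonneg[OF st] by blast
  have e1: "star (1 + y) * (1 + y) = 1 + y + star y + star y * y"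
    by (simp add: star_add algebra_simps)
  have r1: "Im (\<phi> (star (1 + y) * (1 + y))) = 0" using state_star_mult_nonneg[OF st] by blast
  hence i1: "Im (\<phi> y) + Im (\<phi> (star y)) = 0" unfolding e1 using cl o ryy by (simp add: clinear_add)
  have s2: "star (1 + scal \<i> y) = 1 - scal \<i> (star y)" by (simp add: star_add star_scal scal_minus_left)
  have i_square: "scal \<i> (star y) * scal \<i> y = - (star y * y)"
    using scal_mult_both[of \<i> "star y" \<i> y] by (simp add: scal_minus_left)
  have e2: "star (1 + scal \<i> y) * (1 + scal \<i> y) = 1 + scal \<i> y - scal \<i> (star y) + star y * y"
    unfolding s2 using i_square by (simp add: algebra_simps)
  have r2: "Im (\<phi> (star (1 + scal \<i> y) * (1 + scal \<i> y))) = 0" using state_star_mult_nonneg[OF st] by blast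
  hence i2: "Re (\<phi> y) - Re (\<phi> (star y)) = 0" unfolding e2 using cl o ryy
    by (simp add: clinear_add clinear_diff clinear_scal)
  show ?thesis using i1 i2 by (simp add: complex_eq_iff)
qed

text \<open>Positivity of \<open>\<phi>\<close> at \<open>y\<^sup>* y\<close> for \<open>y = x - \<phi>(x)\<close>.\<close>

lemma cmod_state_sq_le:
  assumes st: "is_state scal star \<phi>"
  shows "(cmod (\<phi> x))^2 \<le> Re (\<phi> (star x * x))"
proof -
  have cl: "clinear_functional scal \<phi>" using state_clinear[OF st] .
  have o: "\<phi> 1 = 1" using state_one[OF st] .
  define \<alpha> where "\<alpha> = \<phi> x"
  define y where "y = x - scal \<alpha> 1"
  have sy: "star y = star x - scal (cnj \<alpha>) 1" unfolding y_def by (simp add: star_diff star_scal)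
  have "star y * y = star x * x - star x * scal \<alpha> 1 - scal (cnj \<alpha>) 1 * x + scal (cnj \<alpha>) 1 * scal \<alpha> 1"
    unfolding sy unfolding y_def by (simp add: algebra_simps)
  also have "\<dots> = star x * x - scal \<alpha> (star x) - scal (cnj \<alpha>) x + scal (cnj \<alpha> * \<alpha>) 1"
    by (simp add: scal_one_mult mult_scal_one scal_mult_both scal_scal mult.commute)
  finally have "star y * y = star x * x - scal \<alpha> (star x) - scal (cnj \<alpha>) x + scal (cnj \<alpha> * \<alpha>) 1" .
  hence "\<phi> (star y * y) = \<phi> (star x * x) - \<alpha> * cnj \<alpha> - cnj \<alpha> * \<alpha> + cnj \<alpha> * \<alpha>"
    using cl o state_star[OF st, of x] unfolding \<alpha>_def
    by (simp add: clinear_add clinear_diff clinear_scal)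
  hence "Re (\<phi> (star y * y)) = Re (\<phi> (star x * x)) - (cmod \<alpha>)^2"
    by (simp add: complex_norm_square[symmetric] mult.commute)
  moreover have "Re (\<phi> (star y * y)) \<ge> 0" using state_star_mult_nonneg[OF st] by blast
  ultimately show ?thesis unfolding \<alpha>_def by simp
qed

text \<open>For \<open>T > \<parallel>x\<parallel>\<^sup>2\<close>, \<open>1 - x\<^sup>* x / T\<close> is the square of a self-adjoint element, so \<open>\<phi>(x\<^sup>* x) \<le> T\<close>.\<close>

lemma Re_state_star_mult_le:
  assumes st: "is_state scal star \<phi>"
  shows "Re (\<phi> (star x * x)) \<le> (norm x)^2"
proof (rule field_le_epsilon)
  fix \<delta> :: real assume d: "\<delta> > 0"
  have cl: "clinear_functional scal \<phi>" using state_clinear[OF st] .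
  have o: "\<phi> 1 = 1" using state_one[OF st] .
  define T where "T = (norm x)^2 + \<delta>"
  have T: "T > 0" using d unfolding T_def by (simp add: add_nonneg_pos)
  define g where "g = scal (complex_of_real (1 / T)) (star x * x)"
  have sag: "star g = g" unfolding g_def by (simp add: star_scal star_mult star_star)
  have "norm g = norm (star x * x) / T" unfolding g_def using T by (simp add: norm_scal norm_divide)
  also have "\<dots> = (norm x)^2 / T" by (simp add: cstar_identity)
  also have "\<dots> < 1" using T d unfolding T_def by simp
  finally obtain y where y: "star y = y" "y * y = 1 - g" using sa_sqrt_one_minus[OF sag] by blast
  have "Re (\<phi> (star y * y)) \<ge> 0" using state_star_mult_nonneg[OF st] by blast
  hence "Re (\<phi> (1 - g)) \<ge> 0" using y by simp
  hence "Re (\<phi> g) \<le> 1" using cl o by (simp add: clinear_diff)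
  hence "Re (\<phi> (star x * x)) / T \<le> 1" unfolding g_def using cl by (simp add: clinear_scal)
  thus "Re (\<phi> (star x * x)) \<le> (norm x)^2 + \<delta>" using T unfolding T_def by (simp add: field_simps)
qed

theorem norm_state_le:
  assumes st: "is_state scal star \<phi>"
  shows "cmod (\<phi> x) \<le> norm x"
proof -
  have "(cmod (\<phi> x))^2 \<le> (norm x)^2" using cmod_state_sq_le[OF st] Re_state_star_mult_le[OF st] order_trans by blast
  thus ?thesis by (simp add: power2_le_iff_abs_le)
qed

theorem state_of_contractive:
  assumes F: "contractive_functional F" "F 1 = 1"
  shows "is_state scal star F"
  unfolding is_state_def
proof (intro conjI allI contractive_functionalD(1)[OF F(1)] F(2))
  fix x
  have sa: "star (star x * x) = star x * x" by (simp add: star_mult star_star)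
  show "Im (F (star x * x)) = 0" by (rule contractive_unital_sa_real[OF F sa])
  define k where "k = star x * x"
  have pk: "positive_elem k" unfolding k_def by (rule positive_star_mult)
  have "norm (scal (complex_of_real (norm k)) 1 - k) \<le> norm k" by (rule positive_elem_norm_bound[OF pk order_refl])
  hence "cmod (F (scal (complex_of_real (norm k)) 1 - k)) \<le> norm k"
    using contractive_functionalD(2)[OF F(1)] order_trans by blast
  hence "cmod (complex_of_real (norm k) - F k) \<le> norm k"
    using contractive_functionalD(1)[OF F(1)] F(2) by (simp add: clinear_diff clinear_scal)
  hence "Re (complex_of_real (norm k) - F k) \<le> norm k" using complex_Re_le_cmod order_trans by blast
  thus "Re (F (star x * x)) \<ge> 0" unfolding k_def by simp
qed

theorem state_attaining_spectral_value:
  assumes "\<mu> \<in> spectrum x"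
  shows "\<exists>F. is_state scal star F \<and> F x = \<mu>"
  using spectrum_value_functional[OF assms] state_of_contractive by metis

lemma pos_matrix_quadratic_form:
  assumes cl: "clinear_functional scal \<phi>"
    and a: "\<forall>i<n. \<forall>j<n. a i j = (\<Sum>k<n. star (b k i) * b k j)"
  shows "(\<Sum>i<n. \<Sum>j<n. cnj (v i) * \<phi> (a i j) * v j)
           = (\<Sum>k<n. \<phi> (star (\<Sum>j<n. scal (v j) (b k j)) * (\<Sum>j<n. scal (v j) (b k j))))"
proof -
  have yy: "star (\<Sum>j<n. scal (v j) (b k j)) * (\<Sum>j<n. scal (v j) (b k j))
            = (\<Sum>i<n. \<Sum>j<n. scal (cnj (v i) * v j) (star (b k i) * b k j))" for k
    by (simp add: star_sum star_scal sum_distrib_left sum_distrib_right scal_mult_both) (rule sum.swap)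
  have "(\<Sum>i<n. \<Sum>j<n. cnj (v i) * \<phi> (a i j) * v j)
        = (\<Sum>i<n. \<Sum>j<n. \<Sum>k<n. cnj (v i) * v j * \<phi> (star (b k i) * b k j))"
    using a cl by (intro sum.cong refl) (simp add: clinear_sum sum_distrib_left sum_distrib_right ac_simps)
  also have "\<dots> = (\<Sum>i<n. \<Sum>k<n. \<Sum>j<n. cnj (v i) * v j * \<phi> (star (b k i) * b k j))"
    by (rule sum.cong[OF refl], rule sum.swap)
  also have "\<dots> = (\<Sum>k<n. \<Sum>i<n. \<Sum>j<n. cnj (v i) * v j * \<phi> (star (b k i) * b k j))"
    by (rule sum.swap)
  also have "\<dots> = (\<Sum>k<n. \<phi> (star (\<Sum>j<n. scal (v j) (b k j)) * (\<Sum>j<n. scal (v j) (b k j))))"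
    unfolding yy using cl by (simp add: clinear_sum clinear_scal)
  finally show ?thesis .
qed

theorem state_is_ucp:
  assumes st: "is_state scal star \<phi>"
  shows "ucp_functional scal star \<phi>"
  unfolding ucp_functional_def
proof (intro conjI allI impI state_clinear[OF st] state_one[OF st])
  fix n and a :: "nat \<Rightarrow> nat \<Rightarrow> 'a"
  assume "pos_matrix_alg star n a"
  then obtain b where b: "\<forall>i<n. \<forall>j<n. a i j = (\<Sum>k<n. star (b k i) * b k j)"
    unfolding pos_matrix_alg_def by blast
  show "psd_complex_matrix n (\<lambda>i j. \<phi> (a i j))"
    unfolding psd_complex_matrix_def Let_def pos_matrix_quadratic_form[OF state_clinear[OF st] b]
    using state_star_mult_nonneg[OF st] by (simp add: Im_sum Re_sum sum_nonneg)
qed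

lemma ucp_is_state:
  assumes u: "ucp_functional scal star \<phi>"
  shows "is_state scal star \<phi>"
  unfolding is_state_def
proof (intro conjI allI)
  show "clinear_functional scal \<phi>" "\<phi> 1 = 1" using u unfolding ucp_functional_def by auto
  fix x
  have "pos_matrix_alg star 1 (\<lambda>i j. star x * x)"
    unfolding pos_matrix_alg_def by (rule exI[of _ "\<lambda>k i. x"]) simp
  hence "psd_complex_matrix 1 (\<lambda>i j. \<phi> (star x * x))" using u unfolding ucp_functional_def by blast
  from this[unfolded psd_complex_matrix_def Let_def, rule_format, of "\<lambda>_. 1"]
  have "Im (\<phi> (star x * x)) = 0 \<and> 0 \<le> Re (\<phi> (star x * x))" by simp
  thus "Im (\<phi> (star x * x)) = 0" "Re (\<phi> (star x * x)) \<ge> 0" by auto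
qed

end

section \<open>Peaking states\<close>

context unital_cstar_algebra
begin

lemma operator_systemD:
  assumes OS: "operator_system scal star S"
  shows "0 \<in> S" "1 \<in> S" "\<And>x y. x \<in> S \<Longrightarrow> y \<in> S \<Longrightarrow> x + y \<in> S"
    "\<And>c x. x \<in> S \<Longrightarrow> scal c x \<in> S" "\<And>x. x \<in> S \<Longrightarrow> star x \<in> S"
  using OS unfolding operator_system_def by auto

lemma restrict_state_in_sa_unit_ball_dual:
  assumes OS: "operator_system scal star S" and st: "is_state scal star \<phi>"
  shows "restrict_fun S \<phi> \<in> sa_unit_ball_dual scal star S"
  unfolding sa_unit_ball_dual_def restrict_fun_def
  using operator_systemD[OF OS] state_clinear[OF st] state_star[OF st] norm_state_le[OF st]
  by (auto simp: clinear_add clinear_scal)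

lemma sa_unit_ball_dual_uminus:
  assumes "\<Lambda> \<in> sa_unit_ball_dual scal star S"
  shows "(\<lambda>x. - \<Lambda> x) \<in> sa_unit_ball_dual scal star S"
  using assms unfolding sa_unit_ball_dual_def by (auto simp: algebra_simps)

lemma sa_unit_ball_dual_real_part:
  assumes "\<Lambda> \<in> sa_unit_ball_dual scal star S" "operator_system scal star S" "x \<in> S"
  shows "\<Lambda> (scal (1/2) (x + star x)) = complex_of_real (Re (\<Lambda> x))"
proof -
  have "\<Lambda> (scal (1/2) (x + star x)) = (1/2) * (\<Lambda> x + cnj (\<Lambda> x))"
    using assms operator_systemD[OF assms(2)] unfolding sa_unit_ball_dual_def by simp
  thus ?thesis by (simp add: complex_eq_iff)
qed

lemma norm_sa_le_of_states:
  assumes sa: "star s = s" and bd: "\<And>\<phi>. is_state scal star \<phi> \<Longrightarrow> cmod (\<phi> s) \<le> 1"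
  shows "norm s \<le> 1"
proof -
  obtain \<mu> where "\<mu> \<in> spectrum s" "cmod \<mu> = norm s" using sa_norm_in_spectrum[OF sa] by blast
  thus ?thesis using state_attaining_spectral_value bd by metis
qed

text \<open>The spectrum of \<open>s\<close> lies in \<open>[-1, 1]\<close> and, being closed, stays away from \<open>-1\<close>; shifting it
  by a small \<open>\<delta>\<close> keeps it inside \<open>[-1 + \<delta>, 1 - \<delta>]\<close>.\<close>

lemma norm_sa_diff_scal_one_le:
  assumes sa: "star s = s" and ns: "norm s \<le> 1" and m1: "- 1 \<notin> spectrum s"
  obtains \<delta> where "\<delta> > 0" "norm (s - scal (complex_of_real \<delta>) 1) \<le> 1 - \<delta>"
proof -
  have "invertible_elem (s - scal (- 1) 1)" using m1 unfolding spectrum_def by simp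
  then obtain e where e: "e > 0" "ball (s - scal (- 1) 1) e \<subseteq> {x. invertible_elem x}"
    using open_invertible_elem by (metis mem_Collect_eq open_contains_ball)
  define \<delta> where "\<delta> = min (e/2) (1/2)"
  have "norm (s - scal (complex_of_real \<delta>) 1) \<le> 1 - \<delta>"
  proof (rule sa_norm_le_spectral_bound)
    show "star (s - scal (complex_of_real \<delta>) 1) = s - scal (complex_of_real \<delta>) 1"
      using sa by (simp add: star_diff star_scal)
    fix \<mu> assume "\<mu> \<in> spectrum (s - scal (complex_of_real \<delta>) 1)"
    hence ml: "\<mu> + complex_of_real \<delta> \<in> spectrum s"
      using spectrum_add_scal_one[of \<mu> s "- complex_of_real \<delta>"] by (simp add: scal_minus_left)
    define l where "l = Re (\<mu> + complex_of_real \<delta>)"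
    have lre: "\<mu> + complex_of_real \<delta> = complex_of_real l" using spectrum_sa_real[OF sa ml] l_def by simp
    have lb: "\<bar>l\<bar> \<le> 1" using spectrum_norm_le[OF ml] lre ns by simp
    have "l \<ge> -1 + e"
    proof (rule ccontr)
      assume "\<not> l \<ge> -1 + e"
      hence "\<bar>l + 1\<bar> < e" using lb by simp
      moreover have "- 1 - complex_of_real l = complex_of_real (- (l + 1))" by simp
      hence "cmod (- 1 - complex_of_real l) = \<bar>l + 1\<bar>" by (simp only: norm_of_real abs_minus_cancel)
      ultimately have "dist (s - scal (complex_of_real l) 1) (s - scal (- 1) 1) < e"
        by (simp add: dist_norm scal_diff_left[symmetric] norm_scal)
      hence "s - scal (complex_of_real l) 1 \<in> ball (s - scal (- 1) 1) e" by (simp add: dist_commute)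
      hence "invertible_elem (s - scal (complex_of_real l) 1)" using e by blast
      thus False using ml lre unfolding spectrum_def by simp
    qed
    moreover have "\<mu> = complex_of_real (l - \<delta>)" using lre by (simp add: algebra_simps)
    ultimately show "cmod \<mu> \<le> 1 - \<delta>" using lb e unfolding \<delta>_def by (auto simp del: of_real_diff)
  qed
  moreover have "\<delta> > 0" using e unfolding \<delta>_def by simp
  ultimately show ?thesis using that by blast
qed

lemma complex_eq_one_of_Re_ge: "1 \<le> Re z \<Longrightarrow> cmod z \<le> 1 \<Longrightarrow> z = 1"
proof -
  assume re: "1 \<le> Re z" and nz: "cmod z \<le> 1"
  have "(Re z)\<^sup>2 + (Im z)\<^sup>2 \<le> 1" using nz cmod_power2[of z] power_le_one[OF norm_ge_zero nz, of 2] by simp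
  moreover have "1 \<le> (Re z)\<^sup>2" using re by (metis one_le_power)
  ultimately have "(Im z)\<^sup>2 \<le> 0" by linarith
  hence "Im z = 0" by simp
  moreover have "Re z \<le> 1" using nz complex_Re_le_cmod order_trans by blast
  ultimately show ?thesis using re by (simp add: complex_eq_iff)
qed

lemma contractive_unital_of_peak:
  assumes F: "contractive_functional F" and Fs: "F s = 1"
    and \<delta>: "\<delta> > 0" "norm (s - scal (complex_of_real \<delta>) 1) \<le> 1 - \<delta>"
  shows "F 1 = 1"
proof (rule complex_eq_one_of_Re_ge)
  have "F (s - scal (complex_of_real \<delta>) 1) = 1 - complex_of_real \<delta> * F 1"
    using contractive_functionalD(1)[OF F] Fs by (simp add: clinear_diff clinear_scal)
  moreover have "cmod (F (s - scal (complex_of_real \<delta>) 1)) \<le> 1 - \<delta>"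
    by (rule order_trans[OF contractive_functionalD(2)[OF F] \<delta>(2)])
  ultimately have "Re (1 - complex_of_real \<delta> * F 1) \<le> 1 - \<delta>"
    using complex_Re_le_cmod order_trans by metis
  thus "1 \<le> Re (F 1)" using \<delta>(1) by simp
  show "cmod (F 1) \<le> 1" using contractive_functionalD(2)[OF F, of 1] by simp
qed

lemma sa_unit_ball_dual_state_extension:
  assumes OS: "operator_system scal star S" and Q: "\<Lambda> \<in> sa_unit_ball_dual scal star S"
    and s: "s \<in> S" "\<Lambda> s = 1"
    and \<delta>: "\<delta> > 0" "norm (s - scal (complex_of_real \<delta>) 1) \<le> 1 - \<delta>"
  obtains F where "is_state scal star F" "\<And>x. x \<in> S \<Longrightarrow> F x = \<Lambda> x"
proof -
  note os = operator_systemD[OF OS]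
  have lin: "\<And>x y. x \<in> S \<Longrightarrow> y \<in> S \<Longrightarrow> \<Lambda> (x + y) = \<Lambda> x + \<Lambda> y"
    "\<And>c x. x \<in> S \<Longrightarrow> \<Lambda> (scal c x) = c * \<Lambda> x" "\<And>x. x \<in> S \<Longrightarrow> cmod (\<Lambda> x) \<le> norm x"
    using Q unfolding sa_unit_ball_dual_def by auto
  obtain F where F: "contractive_functional F" "\<And>x. x \<in> S \<Longrightarrow> F x = \<Lambda> x"
    using complex_hahn_banach[of S \<Lambda>, OF os(1) os(3) os(4) lin] by blast
  have "F s = 1" using F(2) s by simp
  from state_of_contractive[OF F(1) contractive_unital_of_peak[OF F(1) this \<delta>]]
  show ?thesis using that F(2) by blast
qed

lemma peaking_imp_uep:
  assumes "S_peaking scal star S \<psi>"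
  shows "unique_extension_property scal star S \<psi>"
  unfolding unique_extension_property_def
proof (intro allI impI)
  fix \<phi> assume \<phi>: "ucp_functional scal star \<phi> \<and> (\<forall>s\<in>S. \<phi> s = \<psi> s)"
  obtain s where "s \<in> S" "\<psi> s = 1"
    and peak: "\<And>\<phi>. is_state scal star \<phi> \<and> \<phi> \<noteq> \<psi> \<Longrightarrow> cmod (\<phi> s) < 1"
    using assms unfolding S_peaking_def by blast
  hence "\<phi> s = 1" using \<phi> by simp
  thus "\<phi> = \<psi>" using peak[of \<phi>] ucp_is_state \<phi> by fastforce
qed

lemma peaking_imp_exposed:
  assumes OS: "operator_system scal star S" and st: "is_state scal star \<psi>"
    and pk: "S_peaking scal star S \<psi>"
  shows "weak_star_exposed S (sa_unit_ball_dual scal star S) (restrict_fun S \<psi>)"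
proof -
  note os = operator_systemD[OF OS]
  obtain s where s: "s \<in> S" "star s = s" "norm s = 1" "\<psi> s = 1"
    and peak: "\<And>\<phi>. is_state scal star \<phi> \<Longrightarrow> \<phi> \<noteq> \<psi> \<Longrightarrow> cmod (\<phi> s) < 1"
    using pk unfolding S_peaking_def by blast
  have "- 1 \<notin> spectrum s"
  proof
    assume "- 1 \<in> spectrum s"
    then obtain F where F: "is_state scal star F" "F s = - 1"
      using state_attaining_spectral_value by blast
    hence "F \<noteq> \<psi>" using s(4) by auto
    from peak[OF F(1) this] F(2) show False by simp
  qed
  then obtain \<delta> where \<delta>: "\<delta> > 0" "norm (s - scal (complex_of_real \<delta>) 1) \<le> 1 - \<delta>"
    using norm_sa_diff_scal_one_le[OF s(2)] s(3) by auto
  have "\<Lambda> = restrict_fun S \<psi>" if Q: "\<Lambda> \<in> sa_unit_ball_dual scal star S" and "1 \<le> Re (\<Lambda> s)" for \<Lambda>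
  proof -
    have "\<Lambda> s = 1"
      by (rule complex_eq_one_of_Re_ge) (use that s(1,3) in \<open>auto simp: sa_unit_ball_dual_def\<close>)
    then obtain F where F: "is_state scal star F" "\<And>x. x \<in> S \<Longrightarrow> F x = \<Lambda> x"
      using sa_unit_ball_dual_state_extension[OF OS Q s(1) _ \<delta>] by blast
    have "F = \<psi>"
    proof (rule ccontr)
      assume "F \<noteq> \<psi>"
      from peak[OF F(1) this] show False using F(2)[OF s(1)] \<open>\<Lambda> s = 1\<close> by simp
    qed
    thus ?thesis using F(2) Q unfolding restrict_fun_def sa_unit_ball_dual_def by auto
  qed
  hence "Re (\<Lambda> s) < 1"
    if "\<Lambda> \<in> sa_unit_ball_dual scal star S" "\<Lambda> \<noteq> restrict_fun S \<psi>" for \<Lambda>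
    using that not_less by blast
  moreover have "restrict_fun S \<psi> 1 \<noteq> 0"
    using os(2) state_one[OF st] unfolding restrict_fun_def by simp
  moreover have "Re (restrict_fun S \<psi> s) = 1" using s(1,4) unfolding restrict_fun_def by simp
  ultimately show ?thesis
    unfolding weak_star_exposed_def
    using restrict_state_in_sa_unit_ball_dual[OF OS st] s(1) by fastforce
qed

text \<open>For a state \<open>\<phi> \<noteq> \<psi>\<close>, both \<open>\<phi>|\<^sub>S\<close> and \<open>-\<phi>|\<^sub>S\<close> lie in \<open>Q\<close> and differ from \<open>\<psi>|\<^sub>S\<close>: the first by
  the unique extension property (states are completely positive), the second because it
  takes the value \<open>-1\<close> at the unit.\<close>

lemma exposing_point_state_values:
  assumes OS: "operator_system scal star S" and st: "is_state scal star \<psi>"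
    and uep: "unique_extension_property scal star S \<psi>" and x0: "x0 \<in> S"
    and exq: "\<And>\<Lambda>. \<Lambda> \<in> sa_unit_ball_dual scal star S \<Longrightarrow> \<Lambda> \<noteq> restrict_fun S \<psi> \<Longrightarrow> Re (\<Lambda> x0) < 1"
    and sp: "is_state scal star \<phi>" and ne: "\<phi> \<noteq> \<psi>"
  shows "\<bar>Re (\<phi> x0)\<bar> < 1"
proof -
  note RQ = restrict_state_in_sa_unit_ball_dual[OF OS sp]
  have "restrict_fun S \<phi> \<noteq> restrict_fun S \<psi>"
  proof
    assume "restrict_fun S \<phi> = restrict_fun S \<psi>"
    hence "\<forall>x\<in>S. \<phi> x = \<psi> x" unfolding restrict_fun_def by (metis (full_types))
    thus False using uep state_is_ucp[OF sp] ne unfolding unique_extension_property_def by blast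
  qed
  hence "Re (\<phi> x0) < 1" using exq[OF RQ] x0 unfolding restrict_fun_def by simp
  moreover have "(\<lambda>x. - restrict_fun S \<phi> x) \<noteq> restrict_fun S \<psi>"
  proof
    assume "(\<lambda>x. - restrict_fun S \<phi> x) = restrict_fun S \<psi>"
    hence "- restrict_fun S \<phi> 1 = restrict_fun S \<psi> 1" by metis
    thus False using operator_systemD(2)[OF OS] state_one[OF sp] state_one[OF st]
      unfolding restrict_fun_def by simp
  qed
  hence "Re (- \<phi> x0) < 1"
    using exq[OF sa_unit_ball_dual_uminus[OF RQ]] x0 unfolding restrict_fun_def by simp
  ultimately show ?thesis by simp
qed

lemma uep_exposed_imp_peaking:
  assumes OS: "operator_system scal star S" and st: "is_state scal star \<psi>"
    and uep: "unique_extension_property scal star S \<psi>"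
    and ex: "weak_star_exposed S (sa_unit_ball_dual scal star S) (restrict_fun S \<psi>)"
  shows "S_peaking scal star S \<psi>"
proof -
  note os = operator_systemD[OF OS]
  define Q where "Q = sa_unit_ball_dual scal star S"
  obtain x0 where x0: "x0 \<in> S" "Re (restrict_fun S \<psi> x0) = 1"
    and exq: "\<And>\<Lambda>. \<Lambda> \<in> Q \<Longrightarrow> \<Lambda> \<noteq> restrict_fun S \<psi> \<Longrightarrow> Re (\<Lambda> x0) < 1"
    using ex unfolding weak_star_exposed_def Q_def by blast
  define s where "s = scal (1/2) (x0 + star x0)"
  have sS: "s \<in> S" unfolding s_def using os x0 by blast
  have sas: "star s = s" unfolding s_def by (simp add: star_scal star_add star_star add.commute)
  have RQ: "restrict_fun S \<phi> \<in> Q" if "is_state scal star \<phi>" for \<phi>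
    unfolding Q_def by (rule restrict_state_in_sa_unit_ball_dual[OF OS that])
  have state_s: "\<phi> s = complex_of_real (Re (\<phi> x0))" if "is_state scal star \<phi>" for \<phi>
    using sa_unit_ball_dual_real_part[OF RQ[OF that, unfolded Q_def] OS x0(1)] sS x0(1)
    unfolding restrict_fun_def s_def by simp
  have psis: "\<psi> s = 1" using state_s[OF st] x0 unfolding restrict_fun_def by simp
  have small: "cmod (\<phi> s) < 1" if "is_state scal star \<phi>" "\<phi> \<noteq> \<psi>" for \<phi>
    using exposing_point_state_values[OF OS st uep x0(1) _ that] exq state_s[OF that(1)]
    unfolding Q_def by simp
  have "norm s = 1"
  proof (rule antisym)
    show "norm s \<le> 1"
    proof (rule norm_sa_le_of_states[OF sas])
      fix \<phi> assume "is_state scal star \<phi>"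
      thus "cmod (\<phi> s) \<le> 1" using small[of \<phi>] psis by (cases "\<phi> = \<psi>") auto
    qed
    show "1 \<le> norm s" using norm_state_le[OF st, of s] psis by simp
  qed
  thus ?thesis unfolding S_peaking_def using sS sas psis small by blast
qed

end

theorem theorem3p2:
  fixes scal :: "complex \<Rightarrow> 'a::{real_normed_algebra_1, banach} \<Rightarrow> 'a"
    and star :: "'a \<Rightarrow> 'a"
    and S :: "'a set"
    and \<psi> :: "'a \<Rightarrow> complex"
  assumes "unital_cstar_algebra scal star"
    and "operator_system scal star S"
    and "is_state scal star \<psi>"
  shows "S_peaking scal star S \<psi> \<longleftrightarrow>
         (unique_extension_property scal star S \<psi> \<and>
          weak_star_exposed S (sa_unit_ball_dual scal star S) (restrict_fun S \<psi>))"
proof -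
  interpret unital_cstar_algebra scal star by fact
  show ?thesis
    using peaking_imp_uep peaking_imp_exposed uep_exposed_imp_peaking assms(2,3) by blast
qed

end
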